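(* In the setting described in the context, let $\theta>0$ and $x,y\in\mathbb{R}$. Then $$\mathrm{TR}_N\longrightarrow\frac{9(x+y)^2(1+2e^{3\rho T})^2}{8\big(1-2e^{3\rho T}(5+3\rho T)\big)^2}+\frac{(x-y)^2}{8(\rho T+1)^2}\qquad(N\uparrow\infty).$$ Moreover, $$\liminf_{N\uparrow\infty}(\mathrm{TR}_N-\mathrm{TC}_N)=\frac{3(x+y)^2(2e^{3\rho T}+1)^2\big(3(\rho T+3)+2e^{6\rho T}(3\rho T+5)-e^{3\rho T}(12\rho T+19)\big)}{2\big(1-2e^{3\rho T}(3\rho T+5)\big)^2\big(3\rho T+e^{3\rho T}+2e^{6\rho T}(3\rho T+5)+7\big)},$$ and this expression is always nonnegative and is strictly positive if $x\ne-y$.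
   Context: Model: Let $(\Omega,(\mathscr F_t)_{t\ge0},\mathscr F,\mathbb P)$ be a filtered probability space with right-continuous filtration and trivial $\mathscr F_0$, $S^0$ a right-continuous martingale, $\rho,T>0$, $\theta\ge0$ (tax rate), and $\mathbb T_N=\{t_k=kT/N\}_{k=0}^N$, $N\ge2$. Admissible strategies for inventory $z$ are vectors $(\zeta_0,\dots,\zeta_N)$ of bounded random variables, $\zeta_k$ $\mathscr F_{t_k}$-measurable, $\sum\zeta_k=z$. With $S^{\bm\xi,\bm\eta}_t=S^0_t-\sum_{t_k<t}e^{-\rho(t-t_k)}(\xi_k+\eta_k)$ and $(\varepsilon_k)$ i.i.d. Bernoulli$(1/2)$ independent of $\sigma(\bigcup_t\mathscr F_t)$, the costs are $\mathscr C_{\mathbb T_N}(\bm\xi|\bm\eta)=xS^0_0+\sum_{k=0}^N(\frac12\xi_k^2-S^{\bm\xi,\bm\eta}_{t_k}\xi_k+\varepsilon_k\xi_k\eta_k+\theta\xi_k^2)$ and $\mathscr C_{\mathbb T_N}(\bm\eta|\bm\xi)=yS^0_0+\sum_{k=0}^N(\frac12\eta_k^2-S^{\bm\xi,\bm\eta}_{t_k}\eta_k+(1-\varepsilon_k)\xi_k\eta_k+\theta\eta_k^2)$. The unique Nash equilibrium (each strategy minimizes its expected cost given the other) is $\bm\xi^{(N)}=\frac12(x+y)\bm v+\frac12(x-y)\bm w$, $\bm\eta^{(N)}=\frac12(x+y)\bm v-\frac12(x-y)\bm w$, where $\bm v=\bm\nu/(\mathbf1^\top\bm\nu)$, $\bm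 w=\bm\omega/(\mathbf1^\top\bm\omega)$, $\bm\nu=(\Gamma+\tilde\Gamma+2\theta\mathrm{Id})^{-1}\mathbf1$, $\bm\omega=(\Gamma-\tilde\Gamma+2\theta\mathrm{Id})^{-1}\mathbf1$, $\tilde\Gamma$ the $(N+1)\times(N+1)$ lower triangular matrix with entries $1/2$ on the diagonal and $e^{-\rho(i-j)T/N}$ for $i>j$, and $\Gamma=\tilde\Gamma+\tilde\Gamma^\top$. Define the total tax revenues $\mathrm{TR}_N:=\theta(\bm\xi^{(N)})^\top\bm\xi^{(N)}+\theta(\bm\eta^{(N)})^\top\bm\eta^{(N)}$, the total costs $C_N(\theta):=\mathbb E[\mathscr C_{\mathbb T_N}(\bm\xi^{(N)}|\bm\eta^{(N)})]+\mathbb E[\mathscr C_{\mathbb T_N}(\bm\eta^{(N)}|\bm\xi^{(N)})]$ (the equilibrium being the one for tax rate $\theta$), and the total taxation costs $\mathrm{TC}_N:=C_N(\theta)-C_N(0)$. *)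

theory Defs
  imports Complex_Main "HOL-Library.Extended_Real" "Jordan_Normal_Form.Gauss_Jordan_Elimination"
begin

(* Time grid t_k = k T / N, k = 0..N.  Matrices are (N+1) x (N+1), indices 0..N. *)

definition GammaT :: "real \<Rightarrow> real \<Rightarrow> nat \<Rightarrow> real mat" where
  "GammaT \<rho> T N = mat (N+1) (N+1) (\<lambda>(i,j).
     if i = j then 1/2 else if j < i then exp (- \<rho> * (real i - real j) * T / real N) else 0)"

definition Gamma :: "real \<Rightarrow> real \<Rightarrow> nat \<Rightarrow> real mat" where
  "Gamma \<rho> T N = GammaT \<rho> T N + transpose_mat (GammaT \<rho> T N)"

definition ones :: "nat \<Rightarrow> real vec" where
  "ones N = vec (N+1) (\<lambda>_. 1)"

definition nu :: "real \<Rightarrow> real \<Rightarrow> real \<Rightarrow> nat \<Rightarrow> real vec" where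
  "nu \<rho> T \<theta> N = the (mat_inverse (Gamma \<rho> T N + GammaT \<rho> T N + (2*\<theta>) \<cdot>\<^sub>m 1\<^sub>m (N+1))) *\<^sub>v ones N"

definition omega :: "real \<Rightarrow> real \<Rightarrow> real \<Rightarrow> nat \<Rightarrow> real vec" where
  "omega \<rho> T \<theta> N = the (mat_inverse (Gamma \<rho> T N - GammaT \<rho> T N + (2*\<theta>) \<cdot>\<^sub>m 1\<^sub>m (N+1))) *\<^sub>v ones N"

definition vv :: "real \<Rightarrow> real \<Rightarrow> real \<Rightarrow> nat \<Rightarrow> real vec" where
  "vv \<rho> T \<theta> N = (1 / (\<Sum>k\<le>N. nu \<rho> T \<theta> N $ k)) \<cdot>\<^sub>v nu \<rho> T \<theta> N"

definition ww :: "real \<Rightarrow> real \<Rightarrow> real \<Rightarrow> nat \<Rightarrow> real vec" where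
  "ww \<rho> T \<theta> N = (1 / (\<Sum>k\<le>N. omega \<rho> T \<theta> N $ k)) \<cdot>\<^sub>v omega \<rho> T \<theta> N"

definition xiN :: "real \<Rightarrow> real \<Rightarrow> real \<Rightarrow> real \<Rightarrow> real \<Rightarrow> nat \<Rightarrow> nat \<Rightarrow> real" where
  "xiN \<rho> T \<theta> x y N k = (x+y)/2 * (vv \<rho> T \<theta> N $ k) + (x-y)/2 * (ww \<rho> T \<theta> N $ k)"

definition etaN :: "real \<Rightarrow> real \<Rightarrow> real \<Rightarrow> real \<Rightarrow> real \<Rightarrow> nat \<Rightarrow> nat \<Rightarrow> real" where
  "etaN \<rho> T \<theta> x y N k = (x+y)/2 * (vv \<rho> T \<theta> N $ k) - (x-y)/2 * (ww \<rho> T \<theta> N $ k)"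

(* Expected cost E[C_{T_N}(xi | eta)] of deterministic strategies xi, eta, with inventory z,
   where s0 = S^0_0.  Uses E[S^0_{t_k}] = S^0_0 (martingale property) and E[eps_k] = 1/2. *)
definition expCost :: "real \<Rightarrow> real \<Rightarrow> real \<Rightarrow> real \<Rightarrow> real \<Rightarrow> nat \<Rightarrow> (nat \<Rightarrow> real) \<Rightarrow> (nat \<Rightarrow> real) \<Rightarrow> real" where
  "expCost \<rho> T \<theta> s0 z N \<xi> \<eta> = z * s0 + (\<Sum>k\<le>N.
      1/2 * (\<xi> k)^2
      - (s0 - (\<Sum>j<k. exp (- \<rho> * (real k - real j) * T / real N) * (\<xi> j + \<eta> j))) * \<xi> k
      + 1/2 * \<xi> k * \<eta> k + \<theta> * (\<xi> k)^2)"

definition TR :: "real \<Rightarrow> real \<Rightarrow> real \<Rightarrow> real \<Rightarrow> real \<Rightarrow> nat \<Rightarrow> real" where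
  "TR \<rho> T \<theta> x y N = \<theta> * (\<Sum>k\<le>N. (xiN \<rho> T \<theta> x y N k)^2) + \<theta> * (\<Sum>k\<le>N. (etaN \<rho> T \<theta> x y N k)^2)"

definition totalCost :: "real \<Rightarrow> real \<Rightarrow> real \<Rightarrow> real \<Rightarrow> real \<Rightarrow> real \<Rightarrow> nat \<Rightarrow> real" where
  "totalCost \<rho> T \<theta> s0 x y N =
     expCost \<rho> T \<theta> s0 x N (xiN \<rho> T \<theta> x y N) (etaN \<rho> T \<theta> x y N)
   + expCost \<rho> T \<theta> s0 y N (etaN \<rho> T \<theta> x y N) (xiN \<rho> T \<theta> x y N)"

definition TC :: "real \<Rightarrow> real \<Rightarrow> real \<Rightarrow> real \<Rightarrow> real \<Rightarrow> real \<Rightarrow> nat \<Rightarrow> real" where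
  "TC \<rho> T \<theta> s0 x y N = totalCost \<rho> T \<theta> s0 x y N - totalCost \<rho> T 0 s0 x y N"

end

theory Submission
  imports Defs "Jordan_Normal_Form.Determinant" "HOL-Library.Quadratic_Discriminant"
begin

text \<open>The equilibrium weights \<open>\<nu>\<close> and \<open>\<omega>\<close> solve the discounted linear systems
  \<open>2 \<cdot> past_sum \<nu> + future_sum \<nu> + (3/2 + 2\<theta>) \<nu> = 1\<close> and \<open>future_sum \<omega> + (1/2 + 2\<theta>) \<omega> = 1\<close>, which are
  uniquely solvable because the symmetrised quadratic form of these operators is positive definite.
  On geometric sequences the operators act through a quadratic characteristic polynomial, so \<open>\<nu>\<close> is an
  explicit combination of \<open>1\<close> and the powers of its two roots, with coefficients fixed by the two
  boundary conditions, and \<open>\<omega>\<close> is explicit as well. As \<open>N \<rightarrow> \<infinity>\<close> the larger root is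
  \<open>1 + 3\<rho>T/N + o(1/N)\<close>, so its \<open>N\<close>-th power tends to \<open>exp (3\<rho>T)\<close>, and the sums of \<open>\<nu>\<close>, \<open>\<nu>\<^sup>2\<close>, \<open>\<omega>\<close>,
  \<open>\<omega>\<^sup>2\<close>, of which \<open>TR\<^sub>N\<close> and \<open>TR\<^sub>N - TC\<^sub>N\<close> are rational functions, converge. Without tax the
  second root tends to \<open>-1\<close>, so the sum of \<open>\<nu>\<close> oscillates with the parity of \<open>N\<close>; the even
  subsequence gives the \<open>liminf\<close>.\<close>

section \<open>Discounted sums\<close>

definition past_sum :: "real \<Rightarrow> (nat \<Rightarrow> real) \<Rightarrow> nat \<Rightarrow> real" where
  "past_sum a f i = (\<Sum>j<i. a^(i-j) * f j)"

definition future_sum :: "real \<Rightarrow> nat \<Rightarrow> (nat \<Rightarrow> real) \<Rightarrow> nat \<Rightarrow> real" where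
  "future_sum a N f i = (\<Sum>j\<in>{i<..N}. a^(j-i) * f j)"

lemma past_sum_0 [simp]: "past_sum a f 0 = 0"
  by (simp add: past_sum_def)

lemma past_sum_Suc: "past_sum a f (Suc i) = a * past_sum a f i + a * f i"
proof -
  have "past_sum a f (Suc i) = (\<Sum>j<i. a^(Suc i-j) * f j) + a * f i"
    by (simp add: past_sum_def)
  also have "(\<Sum>j<i. a^(Suc i-j) * f j) = (\<Sum>j<i. a * (a^(i-j) * f j))"
    by (rule sum.cong) (auto simp: Suc_diff_le)
  finally show ?thesis by (simp add: past_sum_def sum_distrib_left)
qed

lemma past_sum_cong: "(\<And>j. j < i \<Longrightarrow> f j = g j) \<Longrightarrow> past_sum a f i = past_sum a g i"
  by (simp add: past_sum_def)

lemma past_sum_cmult: "past_sum a (\<lambda>j. c * f j) i = c * past_sum a f i"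
  by (simp add: past_sum_def sum_distrib_left mult_ac)

lemma past_sum_lincomb:
  "past_sum a (\<lambda>j. c0 + c1 * f j + c2 * g j) i
     = c0 * past_sum a (\<lambda>_. 1) i + c1 * past_sum a f i + c2 * past_sum a g i"
  by (simp add: past_sum_def sum.distrib sum_distrib_left algebra_simps)

lemma future_sum_last [simp]: "future_sum a N f N = 0"
  by (simp add: future_sum_def)

lemma future_sum_step:
  assumes "i < N"
  shows "future_sum a N f i = a * f (Suc i) + a * future_sum a N f (Suc i)"
proof -
  have split: "{i<..N} = insert (Suc i) {Suc i<..N}" using assms by auto
  have "future_sum a N f i = a * f (Suc i) + (\<Sum>j\<in>{Suc i<..N}. a^(j-i) * f j)"
    unfolding future_sum_def split by (subst sum.insert) auto
  also have "(\<Sum>j\<in>{Suc i<..N}. a^(j-i) * f j) = (\<Sum>j\<in>{Suc i<..N}. a * (a^(j - Suc i) * f j))"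
    by (rule sum.cong) (auto simp: Suc_diff_Suc power_Suc[symmetric] simp del: power_Suc)
  finally show ?thesis by (simp add: future_sum_def sum_distrib_left)
qed

lemma future_sum_lincomb:
  "future_sum a N (\<lambda>j. c0 + c1 * f j + c2 * g j) i
     = c0 * future_sum a N (\<lambda>_. 1) i + c1 * future_sum a N f i + c2 * future_sum a N g i"
  by (simp add: future_sum_def sum.distrib sum_distrib_left algebra_simps)

lemma past_sum_power: "(l - a) * past_sum a (\<lambda>j. l^j) i = a * (l^i - a^i)"
proof (induction i)
  case (Suc i)
  have "(l - a) * past_sum a (\<lambda>j. l^j) (Suc i) = a * ((l - a) * past_sum a (\<lambda>j. l^j) i) + a*(l-a)*l^i"
    by (simp add: past_sum_Suc algebra_simps)
  also have "\<dots> = a * (a * (l^i - a^i)) + a*(l-a)*l^i" by (simp only: Suc)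
  finally show ?case by (simp add: algebra_simps)
qed simp

lemma future_sum_power:
  assumes "i \<le> N"
  shows "(1 - a*l) * future_sum a N (\<lambda>j. l^j) i = a*l*(l^i - a^(N-i)*l^N)"
  using assms
proof (induction i rule: inc_induct)
  case (step i)
  have "a^(N-i) = a * a^(N - Suc i)" using step.hyps by (metis Suc_diff_Suc power_Suc)
  moreover have "(1 - a*l) * future_sum a N (\<lambda>j. l^j) i
      = a*l^Suc i*(1-a*l) + a*((1 - a*l) * future_sum a N (\<lambda>j. l^j) (Suc i))"
    by (simp add: future_sum_step[OF step.hyps(2)] algebra_simps)
  ultimately show ?case unfolding step.IH by (simp add: algebra_simps)
qed simp

lemma future_sum_reversed_power:
  assumes "i \<le> N"
  shows "(m - a) * future_sum a N (\<lambda>j. m^(N-j)) i = a*(m^(N-i) - a^(N-i))"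
  using assms
proof (induction i rule: inc_induct)
  case (step i)
  have "a^(N-i) = a * a^(N - Suc i)" "m^(N-i) = m * m^(N - Suc i)"
    using step.hyps by (metis Suc_diff_Suc power_Suc)+
  moreover have "(m - a) * future_sum a N (\<lambda>j. m^(N-j)) i
      = a*m^(N - Suc i)*(m-a) + a*((m - a) * future_sum a N (\<lambda>j. m^(N-j)) (Suc i))"
    by (simp add: future_sum_step[OF step.hyps(2)] algebra_simps)
  ultimately show ?case unfolding step.IH by (simp add: algebra_simps)
qed simp

lemma sum_mult_future_sum: "(\<Sum>k\<le>N. f k * future_sum a N f k) = (\<Sum>k\<le>N. f k * past_sum a f k)"
proof (induction N)
  case (Suc N)
  have extend: "future_sum a (Suc N) f k = future_sum a N f k + a^(Suc N - k) * f (Suc N)" if "k \<le> N" for k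
  proof -
    have "{k<..Suc N} = insert (Suc N) {k<..N}" using that by auto
    then show ?thesis unfolding future_sum_def by (simp add: add.commute)
  qed
  have "(\<Sum>k\<le>Suc N. f k * future_sum a (Suc N) f k) = (\<Sum>k\<le>N. f k * future_sum a (Suc N) f k)"
    by (simp add: future_sum_def)
  also have "\<dots> = (\<Sum>k\<le>N. f k * future_sum a N f k) + (\<Sum>k\<le>N. f k * (a^(Suc N - k) * f (Suc N)))"
    by (simp add: extend sum.distrib distrib_left)
  also have "\<dots> = (\<Sum>k\<le>N. f k * past_sum a f k) + f (Suc N) * past_sum a f (Suc N)"
    by (simp add: Suc past_sum_def sum_distrib_left lessThan_Suc_atMost mult_ac)
  finally show ?case by simp
qed (simp add: future_sum_def)

section \<open>Positivity of the discounted quadratic form\<close>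

lemma past_sum_quadratic_form_telescope:
  "(\<Sum>i\<le>n. 2 * f i * past_sum a f i + (f i)^2)
     = (past_sum a f n + f n)^2 + (1 - a^2) * (\<Sum>i<n. (past_sum a f i + f i)^2)"
proof (induction n)
  case (Suc n)
  have "past_sum a f (Suc n) = a * (past_sum a f n + f n)" by (simp add: past_sum_Suc algebra_simps)
  moreover have "(\<Sum>i\<le>Suc n. 2 * f i * past_sum a f i + (f i)^2)
      = (past_sum a f n + f n)^2 + (1 - a^2) * (\<Sum>i<n. (past_sum a f i + f i)^2)
        + (2 * f (Suc n) * past_sum a f (Suc n) + (f (Suc n))^2)"
    by (simp add: Suc)
  ultimately show ?case by (simp add: power2_eq_square algebra_simps)
qed (simp add: power2_eq_square)

lemma past_sum_quadratic_form_nonneg: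
  assumes "\<bar>a\<bar> \<le> 1"
  shows "0 \<le> (\<Sum>i\<le>n. 2 * f i * past_sum a f i + (f i)^2)"
proof -
  have "a^2 \<le> 1" using assms by (simp add: abs_le_square_iff abs_square_le_1)
  then show ?thesis unfolding past_sum_quadratic_form_telescope by (simp add: sum_nonneg)
qed

lemma past_sum_quadratic_form_eq_0:
  assumes "\<bar>a\<bar> < 1" and zero: "(\<Sum>i\<le>N. 2 * f i * past_sum a f i + (f i)^2) \<le> 0" and "i \<le> N"
  shows "f i = 0"
proof -
  let ?y = "\<lambda>i. past_sum a f i + f i"
  have pos: "0 < 1 - a^2" using assms(1) by (simp add: abs_square_less_1)
  have "?y N^2 + (1 - a^2) * (\<Sum>i<N. ?y i^2) \<le> 0"
    using zero by (simp only: past_sum_quadratic_form_telescope)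
  moreover have "0 \<le> (\<Sum>i<N. ?y i^2)" by (simp add: sum_nonneg)
  ultimately have "?y N^2 = 0" and "(\<Sum>i<N. ?y i^2) = 0"
    using pos by (smt (verit) mult_nonneg_nonneg zero_le_power2 mult_pos_pos)+
  then have y: "?y i = 0" if "i \<le> N" for i
    using that by (cases "i = N") (auto simp: sum_nonneg_eq_0_iff)
  show ?thesis
  proof (cases i)
    case (Suc k)
    then have "past_sum a f i = a * ?y k" by (simp add: past_sum_Suc algebra_simps)
    then show ?thesis using y[of k] y[of i] \<open>i \<le> N\<close> Suc by simp
  qed (use y[of 0] in simp)
qed

lemma sum_mult_discounted_operator:
  "(\<Sum>i\<le>N. f i * (c * past_sum a f i + future_sum a N f i + g * f i)) =
   (c+1)/2 * (\<Sum>i\<le>N. 2 * f i * past_sum a f i + (f i)^2) + (g - (c+1)/2) * (\<Sum>i\<le>N. (f i)^2)"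
proof -
  have "(\<Sum>i\<le>N. f i * (c * past_sum a f i + future_sum a N f i + g * f i)) =
     (c+1) * (\<Sum>i\<le>N. f i * past_sum a f i) + g * (\<Sum>i\<le>N. (f i)^2)"
    by (simp add: sum.distrib sum_distrib_left sum_mult_future_sum algebra_simps power2_eq_square)
  moreover have "(\<Sum>i\<le>N. 2 * f i * past_sum a f i + (f i)^2)
      = 2 * (\<Sum>i\<le>N. f i * past_sum a f i) + (\<Sum>i\<le>N. (f i)^2)"
    by (simp add: sum.distrib sum_distrib_left mult.assoc)
  ultimately show ?thesis by (simp add: algebra_simps)
qed

text \<open>By summation by parts the quadratic form of \<open>c \<cdot> past_sum + future_sum + g \<cdot> id\<close> is
  \<open>(c+1)/2\<close> times that of \<open>2 \<cdot> past_sum + id\<close>, a telescoping sum of squares, plus \<open>g - (c+1)/2\<close>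
  times \<open>\<Sum> f\<^sup>2\<close>.\<close>

lemma discounted_operator_eq_0:
  assumes "\<bar>a\<bar> < 1" "0 \<le> c" "(c+1)/2 \<le> g"
    and zero: "\<And>i. i \<le> N \<Longrightarrow> c * past_sum a f i + future_sum a N f i + g * f i = 0" and "i \<le> N"
  shows "f i = 0"
proof -
  let ?Q = "\<Sum>i\<le>N. 2 * f i * past_sum a f i + (f i)^2"
  have "(\<Sum>i\<le>N. f i * (c * past_sum a f i + future_sum a N f i + g * f i)) = 0"
    using zero by simp
  then have "(c+1)/2 * ?Q + (g - (c+1)/2) * (\<Sum>i\<le>N. (f i)^2) = 0"
    by (simp only: sum_mult_discounted_operator)
  moreover have "0 \<le> ?Q" using assms(1) by (simp add: past_sum_quadratic_form_nonneg)
  moreover have "0 \<le> (g - (c+1)/2) * (\<Sum>i\<le>N. (f i)^2)" using assms(3) by (simp add: sum_nonneg)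
  ultimately have "(c+1)/2 * ?Q \<le> 0" by linarith
  then have "?Q \<le> 0" using assms(2) by (simp add: mult_le_0_iff)
  then show ?thesis using past_sum_quadratic_form_eq_0 assms(1,5) by blast
qed

section \<open>The equilibrium equations\<close>

lemma mat_inverse_of_trivial_kernel:
  fixes M :: "'a::field mat"
  assumes M: "M \<in> carrier_mat n n" and kernel: "\<And>v. v \<in> carrier_vec n \<Longrightarrow> M *\<^sub>v v = 0\<^sub>v n \<Longrightarrow> v = 0\<^sub>v n"
  obtains B where "mat_inverse M = Some B" "B * M = 1\<^sub>m n" "M * B = 1\<^sub>m n" "B \<in> carrier_mat n n"
proof -
  have "det M \<noteq> 0" unfolding det_0_iff_vec_prod_zero_field[OF M] using kernel by blast
  then have "M \<in> Units (ring_mat TYPE('a) n ())" by (rule det_non_zero_imp_unit[OF M])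
  then have "mat_inverse M \<noteq> None" using mat_inverse(1)[OF M, of "()"] by blast
  then obtain B where B: "mat_inverse M = Some B" by blast
  show ?thesis using mat_inverse(2)[OF M B] by (intro that[OF B]) auto
qed

lemma discounted_system_solution:
  fixes M :: "real mat"
  assumes M: "M \<in> carrier_mat (N+1) (N+1)"
    and action: "\<And>f i. i \<le> N \<Longrightarrow> (M *\<^sub>v vec (N+1) f) $ i = c * past_sum a f i + future_sum a N f i + g * f i"
    and a: "\<bar>a\<bar> < 1" and c: "0 \<le> c" "(c+1)/2 \<le> g"
  defines "v \<equiv> the (mat_inverse M) *\<^sub>v ones N"
  shows "dim_vec v = N+1"
    and "\<And>i. i \<le> N \<Longrightarrow> c * past_sum a (($) v) i + future_sum a N (($) v) i + g * v $ i = 1"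
    and "\<And>f k. (\<And>i. i \<le> N \<Longrightarrow> c * past_sum a f i + future_sum a N f i + g * f i = 1) \<Longrightarrow> k \<le> N
           \<Longrightarrow> v $ k = f k"
proof -
  have kernel: "w = 0\<^sub>v (N+1)" if w: "w \<in> carrier_vec (N+1)" "M *\<^sub>v w = 0\<^sub>v (N+1)" for w
  proof -
    have "w $ i = 0" if "i \<le> N" for i
    proof (rule discounted_operator_eq_0[OF a c _ that])
      fix j assume "j \<le> N"
      have "w = vec (N+1) (($) w)" using w(1) by auto
      then have "(M *\<^sub>v vec (N+1) (($) w)) $ j = 0" using w(2) \<open>j \<le> N\<close> by simp
      then show "c * past_sum a (($) w) j + future_sum a N (($) w) j + g * w $ j = 0"
        using action[OF \<open>j \<le> N\<close>] by simp
    qed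
    then show ?thesis using w(1) by (intro eq_vecI) auto
  qed
  obtain B where B: "mat_inverse M = Some B" "B * M = 1\<^sub>m (N+1)" "M * B = 1\<^sub>m (N+1)" "B \<in> carrier_mat (N+1) (N+1)"
    using mat_inverse_of_trivial_kernel[OF M kernel] by blast
  have v: "v = B *\<^sub>v ones N" by (simp add: v_def B(1))
  show dim: "dim_vec v = N+1" using v B(4) by simp
  have "M *\<^sub>v v = ones N"
    unfolding v using B(3,4) M by (subst assoc_mult_mat_vec[symmetric]) (auto simp: ones_def)
  moreover have "v = vec (N+1) (($) v)" using dim by auto
  ultimately have Mv: "M *\<^sub>v vec (N+1) (($) v) = ones N" by simp
  show "c * past_sum a (($) v) i + future_sum a N (($) v) i + g * v $ i = 1" if "i \<le> N" for i
  proof -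
    have "(M *\<^sub>v vec (N+1) (($) v)) $ i = 1" using Mv that by (simp add: ones_def)
    then show ?thesis using action[OF that] by simp
  qed
  fix f k assume f: "\<And>i. i \<le> N \<Longrightarrow> c * past_sum a f i + future_sum a N f i + g * f i = 1" and "k \<le> N"
  have "ones N = M *\<^sub>v vec (N+1) f"
    by (rule eq_vecI) (use f action M in \<open>auto simp: ones_def less_Suc_eq_le simp del: index_mult_mat_vec\<close>)
  then have "v = (B * M) *\<^sub>v vec (N+1) f"
    unfolding v using B(4) M by (subst assoc_mult_mat_vec) auto
  then show "v $ k = f k" using \<open>k \<le> N\<close> B(2) by simp
qed

definition decay :: "real \<Rightarrow> real \<Rightarrow> nat \<Rightarrow> real" where
  "decay \<rho> T N = exp (- \<rho> * T / real N)"

lemma exp_grid_eq_decay_power: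
  assumes "j \<le> i"
  shows "exp (- (\<rho> * (real i - real j) * T / real N)) = decay \<rho> T N ^ (i - j)"
proof -
  have "- (\<rho> * (real i - real j) * T / real N) = real (i - j) * (- \<rho> * T / real N)"
    using assms by (simp add: of_nat_diff)
  then show ?thesis unfolding decay_def by (simp only: exp_of_nat_mult)
qed

lemma decay_bounds:
  assumes "\<rho> > 0" "T > 0" "N > 0"
  shows "0 < decay \<rho> T N" "decay \<rho> T N < 1"
  using assms by (auto simp: decay_def)

definition nu_matrix :: "real \<Rightarrow> real \<Rightarrow> real \<Rightarrow> nat \<Rightarrow> real mat" where
  "nu_matrix \<rho> T \<theta> N = Gamma \<rho> T N + GammaT \<rho> T N + (2*\<theta>) \<cdot>\<^sub>m 1\<^sub>m (N+1)"

definition omega_matrix :: "real \<Rightarrow> real \<Rightarrow> real \<Rightarrow> nat \<Rightarrow> real mat" where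
  "omega_matrix \<rho> T \<theta> N = Gamma \<rho> T N - GammaT \<rho> T N + (2*\<theta>) \<cdot>\<^sub>m 1\<^sub>m (N+1)"

lemma nu_matrix_carrier: "nu_matrix \<rho> T \<theta> N \<in> carrier_mat (N+1) (N+1)"
  by (simp add: nu_matrix_def Gamma_def GammaT_def)

lemma omega_matrix_carrier: "omega_matrix \<rho> T \<theta> N \<in> carrier_mat (N+1) (N+1)"
  by (simp add: omega_matrix_def Gamma_def GammaT_def)

lemma sum_split_at:
  fixes i N :: nat
  assumes "i \<le> N"
  shows "(\<Sum>j\<in>{0..<N+1}. if j < i then g1 j else if j = i then g2 j else g3 j) =
    (\<Sum>j<i. g1 j) + g2 i + (\<Sum>j\<in>{i<..N}. g3 j)"
proof -
  let ?h = "\<lambda>j. if j < i then g1 j else if j = i then g2 j else g3 j"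
  have split: "{0..<N+1} = {..<i} \<union> ({i} \<union> {i<..N})" using assms by auto
  have "sum ?h ({..<i} \<union> ({i} \<union> {i<..N})) = sum ?h {..<i} + sum ?h ({i} \<union> {i<..N})"
    by (rule sum.union_disjoint) auto
  also have "sum ?h ({i} \<union> {i<..N}) = sum ?h {i} + sum ?h {i<..N}"
    by (rule sum.union_disjoint) auto
  also have "sum ?h {..<i} = (\<Sum>j<i. g1 j)" by (rule sum.cong) auto
  also have "sum ?h {i<..N} = (\<Sum>j\<in>{i<..N}. g3 j)" by (rule sum.cong) auto
  finally show ?thesis unfolding split by (simp add: add.assoc)
qed

lemma nu_matrix_mult_vec:
  assumes "i \<le> N"
  shows "(nu_matrix \<rho> T \<theta> N *\<^sub>v vec (N+1) f) $ i
    = 2 * past_sum (decay \<rho> T N) f i + future_sum (decay \<rho> T N) N f i + (3/2 + 2*\<theta>) * f i"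
proof -
  have "(nu_matrix \<rho> T \<theta> N *\<^sub>v vec (N+1) f) $ i = (\<Sum>j\<in>{0..<N+1}. nu_matrix \<rho> T \<theta> N $$ (i,j) * f j)"
    using assms nu_matrix_carrier[of \<rho> T \<theta> N] by (simp add: scalar_prod_def)
  also have "\<dots> = (\<Sum>j\<in>{0..<N+1}. if j < i then 2 * decay \<rho> T N ^ (i-j) * f j
      else if j = i then (3/2 + 2*\<theta>) * f j else decay \<rho> T N ^ (j-i) * f j)"
    by (rule sum.cong)
       (use assms in \<open>auto simp: nu_matrix_def Gamma_def GammaT_def exp_grid_eq_decay_power\<close>)
  also have "\<dots> = 2 * past_sum (decay \<rho> T N) f i + future_sum (decay \<rho> T N) N f i + (3/2 + 2*\<theta>) * f i"
    unfolding sum_split_at[OF assms] by (simp add: past_sum_def future_sum_def sum_distrib_left mult_ac)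
  finally show ?thesis .
qed

lemma omega_matrix_mult_vec:
  assumes "i \<le> N"
  shows "(omega_matrix \<rho> T \<theta> N *\<^sub>v vec (N+1) f) $ i
    = 0 * past_sum (decay \<rho> T N) f i + future_sum (decay \<rho> T N) N f i + (1/2 + 2*\<theta>) * f i"
proof -
  have "(omega_matrix \<rho> T \<theta> N *\<^sub>v vec (N+1) f) $ i = (\<Sum>j\<in>{0..<N+1}. omega_matrix \<rho> T \<theta> N $$ (i,j) * f j)"
    using assms omega_matrix_carrier[of \<rho> T \<theta> N] by (simp add: scalar_prod_def)
  also have "\<dots> = (\<Sum>j\<in>{0..<N+1}. if j < i then 0
      else if j = i then (1/2 + 2*\<theta>) * f j else decay \<rho> T N ^ (j-i) * f j)"
    by (rule sum.cong)
       (use assms in \<open>auto simp: omega_matrix_def Gamma_def GammaT_def exp_grid_eq_decay_power\<close>)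
  also have "\<dots> = 0 * past_sum (decay \<rho> T N) f i + future_sum (decay \<rho> T N) N f i + (1/2 + 2*\<theta>) * f i"
    unfolding sum_split_at[OF assms] by (simp add: future_sum_def)
  finally show ?thesis .
qed

lemma nu_solves:
  assumes "\<rho> > 0" "T > 0" "N > 0" "\<theta> \<ge> 0"
  shows "dim_vec (nu \<rho> T \<theta> N) = N+1"
    and "\<And>i. i \<le> N \<Longrightarrow> 2 * past_sum (decay \<rho> T N) (($) (nu \<rho> T \<theta> N)) i
           + future_sum (decay \<rho> T N) N (($) (nu \<rho> T \<theta> N)) i + (3/2 + 2*\<theta>) * nu \<rho> T \<theta> N $ i = 1"
    and "\<And>f k. (\<And>i. i \<le> N \<Longrightarrow> 2 * past_sum (decay \<rho> T N) f i + future_sum (decay \<rho> T N) N f i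
           + (3/2 + 2*\<theta>) * f i = 1) \<Longrightarrow> k \<le> N \<Longrightarrow> nu \<rho> T \<theta> N $ k = f k"
proof -
  have "\<bar>decay \<rho> T N\<bar> < 1" "(2+1)/2 \<le> 3/2 + 2*\<theta>" using decay_bounds[OF assms(1-3)] assms(4) by auto
  from discounted_system_solution[OF nu_matrix_carrier nu_matrix_mult_vec this(1) _ this(2)]
  show "dim_vec (nu \<rho> T \<theta> N) = N+1"
    and "\<And>i. i \<le> N \<Longrightarrow> 2 * past_sum (decay \<rho> T N) (($) (nu \<rho> T \<theta> N)) i
           + future_sum (decay \<rho> T N) N (($) (nu \<rho> T \<theta> N)) i + (3/2 + 2*\<theta>) * nu \<rho> T \<theta> N $ i = 1"
    and "\<And>f k. (\<And>i. i \<le> N \<Longrightarrow> 2 * past_sum (decay \<rho> T N) f i + future_sum (decay \<rho> T N) N f i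
           + (3/2 + 2*\<theta>) * f i = 1) \<Longrightarrow> k \<le> N \<Longrightarrow> nu \<rho> T \<theta> N $ k = f k"
    by (simp_all add: nu_def nu_matrix_def)
qed

lemma omega_solves:
  assumes "\<rho> > 0" "T > 0" "N > 0" "\<theta> \<ge> 0"
  shows "dim_vec (omega \<rho> T \<theta> N) = N+1"
    and "\<And>f k. (\<And>i. i \<le> N \<Longrightarrow> future_sum (decay \<rho> T N) N f i + (1/2 + 2*\<theta>) * f i = 1)
           \<Longrightarrow> k \<le> N \<Longrightarrow> omega \<rho> T \<theta> N $ k = f k"
proof -
  have "\<bar>decay \<rho> T N\<bar> < 1" "(0+1)/2 \<le> 1/2 + 2*\<theta>" using decay_bounds[OF assms(1-3)] assms(4) by auto
  from discounted_system_solution[OF omega_matrix_carrier omega_matrix_mult_vec this(1) _ this(2)]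
  show "dim_vec (omega \<rho> T \<theta> N) = N+1"
    and "\<And>f k. (\<And>i. i \<le> N \<Longrightarrow> future_sum (decay \<rho> T N) N f i + (1/2 + 2*\<theta>) * f i = 1)
           \<Longrightarrow> k \<le> N \<Longrightarrow> omega \<rho> T \<theta> N $ k = f k"
    by (simp_all add: omega_def omega_matrix_def)
qed

section \<open>Tax revenues and costs in terms of the sums of \<open>\<nu>\<close> and \<open>\<omega>\<close>\<close>

definition nu_sum :: "real \<Rightarrow> real \<Rightarrow> real \<Rightarrow> nat \<Rightarrow> real" where "nu_sum \<rho> T \<theta> N = (\<Sum>k\<le>N. nu \<rho> T \<theta> N $ k)"
definition nu_sqsum :: "real \<Rightarrow> real \<Rightarrow> real \<Rightarrow> nat \<Rightarrow> real" where "nu_sqsum \<rho> T \<theta> N = (\<Sum>k\<le>N. (nu \<rho> T \<theta> N $ k)^2)"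
definition omega_sum :: "real \<Rightarrow> real \<Rightarrow> real \<Rightarrow> nat \<Rightarrow> real" where "omega_sum \<rho> T \<theta> N = (\<Sum>k\<le>N. omega \<rho> T \<theta> N $ k)"
definition omega_sqsum :: "real \<Rightarrow> real \<Rightarrow> real \<Rightarrow> nat \<Rightarrow> real" where "omega_sqsum \<rho> T \<theta> N = (\<Sum>k\<le>N. (omega \<rho> T \<theta> N $ k)^2)"

lemma vv_nth: assumes "\<rho> > 0" "T > 0" "N > 0" "\<theta> \<ge> 0" "k \<le> N"
  shows "vv \<rho> T \<theta> N $ k = nu \<rho> T \<theta> N $ k / nu_sum \<rho> T \<theta> N"
  using nu_solves(1)[OF assms(1-4)] assms(5) by (simp add: vv_def nu_sum_def)

lemma ww_nth: assumes "\<rho> > 0" "T > 0" "N > 0" "\<theta> \<ge> 0" "k \<le> N"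
  shows "ww \<rho> T \<theta> N $ k = omega \<rho> T \<theta> N $ k / omega_sum \<rho> T \<theta> N"
  using omega_solves(1)[OF assms(1-4)] assms(5) by (simp add: ww_def omega_sum_def)

lemma TR_eq_sums:
  assumes "\<rho> > 0" "T > 0" "N > 0" "\<theta> \<ge> 0"
  shows "TR \<rho> T \<theta> x y N = \<theta> * ((x+y)^2/2 * (nu_sqsum \<rho> T \<theta> N / (nu_sum \<rho> T \<theta> N)^2)
                                + (x-y)^2/2 * (omega_sqsum \<rho> T \<theta> N / (omega_sum \<rho> T \<theta> N)^2))"
proof -
  have "(\<Sum>k\<le>N. (xiN \<rho> T \<theta> x y N k)^2) + (\<Sum>k\<le>N. (etaN \<rho> T \<theta> x y N k)^2)
     = (\<Sum>k\<le>N. (x+y)^2/2 * (nu \<rho> T \<theta> N $ k)^2 / (nu_sum \<rho> T \<theta> N)^2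
                + (x-y)^2/2 * (omega \<rho> T \<theta> N $ k)^2 / (omega_sum \<rho> T \<theta> N)^2)"
    unfolding sum.distrib[symmetric]
  proof (rule sum.cong)
    fix k assume "k \<in> {..N}"
    then have k: "k \<le> N" by simp
    have pq: "(p+q)^2 + (p-q)^2 = 2*p^2 + 2*q^2" for p q :: real by (simp add: power2_eq_square algebra_simps)
    show "(xiN \<rho> T \<theta> x y N k)^2 + (etaN \<rho> T \<theta> x y N k)^2 = (x+y)^2/2 * (nu \<rho> T \<theta> N $ k)^2 / (nu_sum \<rho> T \<theta> N)^2
                + (x-y)^2/2 * (omega \<rho> T \<theta> N $ k)^2 / (omega_sum \<rho> T \<theta> N)^2"
      unfolding xiN_def etaN_def pq vv_nth[OF assms k] ww_nth[OF assms k]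
      by (simp add: power_mult_distrib power_divide)
  qed simp
  also have "\<dots> = (x+y)^2/2 * (nu_sqsum \<rho> T \<theta> N / (nu_sum \<rho> T \<theta> N)^2)
                                + (x-y)^2/2 * (omega_sqsum \<rho> T \<theta> N / (omega_sum \<rho> T \<theta> N)^2)"
    by (simp add: nu_sqsum_def omega_sqsum_def sum.distrib sum_divide_distrib sum_distrib_left)
  finally show ?thesis unfolding TR_def by (simp add: distrib_left[symmetric])
qed

lemma expCost_past_sum:
  "expCost \<rho> T \<theta> s0 z N \<xi> \<eta> = z * s0 - s0 * (\<Sum>k\<le>N. \<xi> k) +
     (\<Sum>k\<le>N. 1/2 * (\<xi> k)^2 + \<xi> k * past_sum (decay \<rho> T N) (\<lambda>j. \<xi> j + \<eta> j) k + 1/2 * \<xi> k * \<eta> k + \<theta> * (\<xi> k)^2)"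
proof -
  have i: "(\<Sum>j<k. exp (- \<rho> * (real k - real j) * T / real N) * (\<xi> j + \<eta> j)) = past_sum (decay \<rho> T N) (\<lambda>j. \<xi> j + \<eta> j) k" for k
    unfolding past_sum_def by (rule sum.cong) (auto simp: exp_grid_eq_decay_power)
  show ?thesis unfolding expCost_def i
    by (simp add: sum.distrib sum_distrib_left sum_subtractf algebra_simps)
qed

lemma sum_nu_mult_past_sum:
  assumes "\<rho> > 0" "T > 0" "N > 0" "\<theta> \<ge> 0"
  shows "(\<Sum>k\<le>N. nu \<rho> T \<theta> N $ k * past_sum (decay \<rho> T N) (\<lambda>j. nu \<rho> T \<theta> N $ j) k)
     = (nu_sum \<rho> T \<theta> N - (3/2 + 2*\<theta>) * nu_sqsum \<rho> T \<theta> N) / 3"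
proof -
  let ?f = "\<lambda>k. nu \<rho> T \<theta> N $ k" and ?a = "decay \<rho> T N"
  have "nu_sum \<rho> T \<theta> N = (\<Sum>k\<le>N. ?f k * (2 * past_sum ?a ?f k + future_sum ?a N ?f k + (3/2 + 2*\<theta>) * ?f k))"
    unfolding nu_sum_def by (rule sum.cong) (auto simp: nu_solves(2)[OF assms])
  also have "\<dots> = 2 * (\<Sum>k\<le>N. ?f k * past_sum ?a ?f k) + (\<Sum>k\<le>N. ?f k * future_sum ?a N ?f k) + (3/2 + 2*\<theta>) * nu_sqsum \<rho> T \<theta> N"
    by (simp add: nu_sqsum_def sum.distrib sum_distrib_left algebra_simps power2_eq_square)
  also have "\<dots> = 3 * (\<Sum>k\<le>N. ?f k * past_sum ?a ?f k) + (3/2 + 2*\<theta>) * nu_sqsum \<rho> T \<theta> N"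
    by (simp add: sum_mult_future_sum)
  finally show ?thesis by simp
qed

lemma expCost_add_swap:
  "expCost \<rho> T \<theta> s0 x N \<xi> \<eta> + expCost \<rho> T \<theta> s0 y N \<eta> \<xi>
     = (x + y) * s0 - s0 * (\<Sum>k\<le>N. \<xi> k + \<eta> k)
       + (\<Sum>k\<le>N. 1/2 * (\<xi> k + \<eta> k)^2 + (\<xi> k + \<eta> k) * past_sum (decay \<rho> T N) (\<lambda>j. \<xi> j + \<eta> j) k)
       + \<theta> * (\<Sum>k\<le>N. (\<xi> k)^2) + \<theta> * (\<Sum>k\<le>N. (\<eta> k)^2)"
proof -
  have "past_sum (decay \<rho> T N) (\<lambda>j. \<eta> j + \<xi> j) k = past_sum (decay \<rho> T N) (\<lambda>j. \<xi> j + \<eta> j) k" for k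
    by (simp add: add.commute)
  then show ?thesis
    unfolding expCost_past_sum by (simp add: sum.distrib sum_distrib_left algebra_simps power2_eq_square)
qed

lemma xiN_add_etaN:
  assumes "\<rho> > 0" "T > 0" "N > 0" "\<theta> \<ge> 0" "k \<le> N"
  shows "xiN \<rho> T \<theta> x y N k + etaN \<rho> T \<theta> x y N k = (x+y) / nu_sum \<rho> T \<theta> N * nu \<rho> T \<theta> N $ k"
  using assms by (simp add: xiN_def etaN_def vv_nth)

lemma totalCost_eq:
  assumes "\<rho> > 0" "T > 0" "N > 0" "\<theta> \<ge> 0" "nu_sum \<rho> T \<theta> N \<noteq> 0"
  shows "totalCost \<rho> T \<theta> s0 x y N = (x+y)^2 * (1 / (3 * nu_sum \<rho> T \<theta> N) - 2 * \<theta> * nu_sqsum \<rho> T \<theta> N / (3 * (nu_sum \<rho> T \<theta> N)^2))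
      + TR \<rho> T \<theta> x y N"
proof -
  let ?f = "\<lambda>k. nu \<rho> T \<theta> N $ k" and ?a = "decay \<rho> T N" and ?S = "nu_sum \<rho> T \<theta> N" and ?c = "(x+y) / nu_sum \<rho> T \<theta> N"
  let ?z = "\<lambda>k. xiN \<rho> T \<theta> x y N k + etaN \<rho> T \<theta> x y N k"
  note z = xiN_add_etaN[OF assms(1-4)]
  have "(\<Sum>k\<le>N. ?z k) = (\<Sum>k\<le>N. ?c * ?f k)" by (rule sum.cong) (simp_all add: z)
  then have "(\<Sum>k\<le>N. ?z k) = ?c * ?S" by (simp add: nu_sum_def sum_distrib_left)
  moreover have "(\<Sum>k\<le>N. 1/2 * (?z k)^2 + ?z k * past_sum ?a ?z k)
      = ?c^2 * (1/2 * nu_sqsum \<rho> T \<theta> N + (\<Sum>k\<le>N. ?f k * past_sum ?a ?f k))"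
    unfolding nu_sqsum_def sum_distrib_left sum.distrib[symmetric] distrib_left
  proof (rule sum.cong)
    fix k assume "k \<in> {..N}"
    then have "past_sum ?a ?z k = past_sum ?a (\<lambda>j. ?c * ?f j) k" by (intro past_sum_cong) (simp add: z)
    then have past: "past_sum ?a ?z k = ?c * past_sum ?a ?f k" by (simp only: past_sum_cmult)
    have current: "?z k = ?c * ?f k" using \<open>k \<in> {..N}\<close> by (simp add: z)
    have "1/2 * (c * p)^2 + (c * p) * (c * q) = c^2 * (1/2 * p^2) + c^2 * (p * q)" for c p q :: real
      by (simp add: power2_eq_square algebra_simps)
    then show "1/2 * (?z k)^2 + ?z k * past_sum ?a ?z k = ?c^2 * (1/2 * (?f k)^2) + ?c^2 * (?f k * past_sum ?a ?f k)"
      unfolding past current .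
  qed simp
  ultimately have "totalCost \<rho> T \<theta> s0 x y N = (x + y) * s0 - s0 * (?c * ?S)
      + ?c^2 * (1/2 * nu_sqsum \<rho> T \<theta> N + (?S - (3/2 + 2*\<theta>) * nu_sqsum \<rho> T \<theta> N) / 3) + TR \<rho> T \<theta> x y N"
    unfolding totalCost_def expCost_add_swap TR_def sum_nu_mult_past_sum[OF assms(1-4)] by simp
  then show ?thesis using assms(5) by (simp add: field_simps power2_eq_square)
qed

lemma TR_minus_TC_eq:
  assumes "\<rho> > 0" "T > 0" "N > 0" "\<theta> \<ge> 0" "nu_sum \<rho> T \<theta> N \<noteq> 0" "nu_sum \<rho> T 0 N \<noteq> 0"
  shows "TR \<rho> T \<theta> x y N - TC \<rho> T \<theta> s0 x y N =
    (x+y)^2 * (1 / (3 * nu_sum \<rho> T 0 N) - 1 / (3 * nu_sum \<rho> T \<theta> N) + 2 * \<theta> * nu_sqsum \<rho> T \<theta> N / (3 * (nu_sum \<rho> T \<theta> N)^2))"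
  unfolding TC_def totalCost_eq[OF assms(1-5)] totalCost_eq[OF assms(1-3) order_refl assms(6)]
  by (simp add: TR_def algebra_simps)

section \<open>Closed-form solutions of the equilibrium equations\<close>

text \<open>On geometric sequences \<open>l\<^sup>i\<close> the operator \<open>2 \<cdot> past_sum + future_sum + g \<cdot> id\<close> acts as
  multiplication by \<open>char_poly a g l / ((l - a) (1 - a l))\<close>, up to boundary terms in \<open>a\<^sup>i\<close> and \<open>a\<^sup>N\<^sup>-\<^sup>i\<close>.\<close>

definition char_poly :: "real \<Rightarrow> real \<Rightarrow> real \<Rightarrow> real" where
  "char_poly a g l = 2*a*(1 - a*l) + a*l*(l - a) + g*(l - a)*(1 - a*l)"

lemma discounted_operator_power:
  assumes "l \<noteq> a" "a*l \<noteq> 1" "i \<le> N"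
  shows "2 * past_sum a (\<lambda>j. l^j) i + future_sum a N (\<lambda>j. l^j) i + g * l^i =
    char_poly a g l * l^i / ((l - a) * (1 - a*l)) - 2*a*a^i / (l - a) - a*a^(N-i)*l^(N+1) / (1 - a*l)"
proof -
  have nz: "l - a \<noteq> 0" "1 - a*l \<noteq> 0" using assms by auto
  have "past_sum a (\<lambda>j. l^j) i = a * (l^i - a^i) / (l - a)"
    using past_sum_power[of l a i] nz by (simp add: field_simps)
  moreover have "future_sum a N (\<lambda>j. l^j) i = a*l*(l^i - a^(N-i)*l^N) / (1 - a*l)"
    using future_sum_power[OF assms(3), of a l] nz by (simp add: field_simps)
  moreover have "2 * (a * (L - A) / u) + a*l*(L - AN*LN) / v + g * L =
      (2*a*v + a*l*u + g*u*v) * L / (u * v) - 2*a*A / u - a*AN*(l*LN) / v"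
    if "u \<noteq> 0" "v \<noteq> 0" for L A AN LN u v :: real
    using that by (simp add: field_simps)
  ultimately show ?thesis using nz by (simp add: char_poly_def)
qed

lemma discounted_operator_closed_form:
  fixes a g l1 l2 c0 c1 c2 :: real
  assumes "a \<noteq> 1" and l1: "l1 \<noteq> a" "a*l1 \<noteq> 1" and l2: "l2 \<noteq> a" "a*l2 \<noteq> 1"
    and root1: "char_poly a g l1 = 0" and root2: "char_poly a g l2 = 0"
    and const: "c0 * char_poly a g 1 / ((1 - a) * (1 - a)) = 1"
    and left: "c0 / (1 - a) + c1 / (l1 - a) + c2 / (l2 - a) = 0"
    and right: "c0 / (1 - a) + c1 * l1^(N+1) / (1 - a*l1) + c2 * l2^(N+1) / (1 - a*l2) = 0"
    and "i \<le> N"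
  shows "2 * past_sum a (\<lambda>j. c0 + c1 * l1^j + c2 * l2^j) i + future_sum a N (\<lambda>j. c0 + c1 * l1^j + c2 * l2^j) i
     + g * (c0 + c1 * l1^i + c2 * l2^i) = 1"
proof -
  have one: "2 * past_sum a (\<lambda>j. 1) i + future_sum a N (\<lambda>j. 1) i + g * 1 =
    char_poly a g 1 * 1 / ((1 - a) * (1 - a)) - 2*a*a^i / (1 - a) - a*a^(N-i)*1 / (1 - a)"
    using discounted_operator_power[of 1 a i N g] assms(1) \<open>i \<le> N\<close> by simp
  note pow1 = discounted_operator_power[OF l1 \<open>i \<le> N\<close>, of g, unfolded root1]
  note pow2 = discounted_operator_power[OF l2 \<open>i \<le> N\<close>, of g, unfolded root2]
  have "2 * past_sum a (\<lambda>j. c0 + c1 * l1^j + c2 * l2^j) i + future_sum a N (\<lambda>j. c0 + c1 * l1^j + c2 * l2^j) i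
     + g * (c0 + c1 * l1^i + c2 * l2^i)
    = c0 * (2 * past_sum a (\<lambda>j. 1) i + future_sum a N (\<lambda>j. 1) i + g * 1)
      + c1 * (2 * past_sum a (\<lambda>j. l1^j) i + future_sum a N (\<lambda>j. l1^j) i + g * l1^i)
      + c2 * (2 * past_sum a (\<lambda>j. l2^j) i + future_sum a N (\<lambda>j. l2^j) i + g * l2^i)"
    unfolding past_sum_lincomb future_sum_lincomb by (simp add: algebra_simps)
  also have "\<dots> = c0 * char_poly a g 1 / ((1 - a) * (1 - a))
      - 2*a*a^i * (c0 / (1 - a) + c1 / (l1 - a) + c2 / (l2 - a))
      - a*a^(N-i) * (c0 / (1 - a) + c1 * l1^(N+1) / (1 - a*l1) + c2 * l2^(N+1) / (1 - a*l2))"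
    unfolding one pow1 pow2 by (simp add: algebra_simps)
  finally show ?thesis unfolding left right const by simp
qed

definition char_coeff2 :: "real \<Rightarrow> real \<Rightarrow> real" where "char_coeff2 g a = (1 - g) * a"
definition char_coeff1 :: "real \<Rightarrow> real \<Rightarrow> real" where "char_coeff1 g a = g * (1 + a^2) - 3 * a^2"
definition char_coeff0 :: "real \<Rightarrow> real \<Rightarrow> real" where "char_coeff0 g a = (2 - g) * a"

definition char_discr :: "real \<Rightarrow> real \<Rightarrow> real" where
  "char_discr g a = discrim (char_coeff2 g a) (char_coeff1 g a) (char_coeff0 g a)"

definition root1 :: "real \<Rightarrow> real \<Rightarrow> real" where
  "root1 g a = (- char_coeff1 g a - sqrt (char_discr g a)) / (2 * char_coeff2 g a)"

definition root_product :: "real \<Rightarrow> real" where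
  "root_product g = (g - 2) / (g - 1)"

definition root2 :: "real \<Rightarrow> real \<Rightarrow> real" where
  "root2 g a = root_product g / root1 g a"

lemma char_poly_expand: "char_poly a g l = char_coeff2 g a * l^2 + char_coeff1 g a * l + char_coeff0 g a"
  by (simp add: char_poly_def char_coeff2_def char_coeff1_def char_coeff0_def power2_eq_square algebra_simps)

lemma char_coeff2_nonzero: "g > 1 \<Longrightarrow> a > 0 \<Longrightarrow> char_coeff2 g a \<noteq> 0"
  by (simp add: char_coeff2_def)

lemma char_poly_root1:
  assumes "g > 1" "a > 0" "char_discr g a \<ge> 0"
  shows "char_poly a g (root1 g a) = 0"
  using discriminant_nonneg[OF char_coeff2_nonzero[OF assms(1,2)], of _ _ "root1 g a"] assms(3)
  by (simp add: char_poly_expand root1_def char_discr_def)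

lemma char_poly_root2:
  assumes "g > 1" "a > 0" "char_discr g a \<ge> 0" "root1 g a \<noteq> 0"
  shows "char_poly a g (root2 g a) = 0"
proof -
  let ?A = "char_coeff2 g a" and ?B = "char_coeff1 g a" and ?C = "char_coeff0 g a" and ?l = "root1 g a"
  have A: "?A \<noteq> 0" using assms by (simp add: char_coeff2_nonzero)
  have p: "root_product g = ?C / ?A"
    using assms by (simp add: root_product_def char_coeff2_def char_coeff0_def field_simps)
  have "char_poly a g (root2 g a) = ?C / (?A * ?l^2) * (?A * ?l^2 + ?B * ?l + ?C)"
    unfolding char_poly_expand root2_def p using A assms(4) by (simp add: field_simps power2_eq_square)
  then show ?thesis using char_poly_root1[OF assms(1-3)] by (simp add: char_poly_expand)
qed

lemma root_product_bounds: "g \<ge> 3/2 \<Longrightarrow> -1 \<le> root_product g \<and> root_product g < 1"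
  by (auto simp: root_product_def field_simps)

lemma char_discr_at_1: "char_discr g 1 = 1"
  by (simp add: char_discr_def discrim_def char_coeff2_def char_coeff1_def char_coeff0_def
      power2_eq_square algebra_simps)

lemma root1_at_1: "g > 1 \<Longrightarrow> root1 g 1 = 1"
  by (simp add: root1_def char_discr_at_1 char_coeff2_def char_coeff1_def field_simps)

lemma root1_factorisation:
  assumes "g > 1" "a > 0" "char_discr g a \<ge> 0"
  shows "char_coeff2 g a * (root1 g a - 1) * (root1 g a - root_product g)
    = - (1 - a) * (g * (1 - a) + 3 * a) * root1 g a"
proof -
  let ?l = "root1 g a" and ?A = "char_coeff2 g a" and ?B = "char_coeff1 g a" and ?C = "char_coeff0 g a"
  have root: "?A * ?l^2 + ?B * ?l + ?C = 0"
    using char_poly_root1[OF assms] by (simp add: char_poly_expand)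
  have product: "?A * root_product g = ?C"
    using assms(1) by (simp add: char_coeff2_def char_coeff0_def root_product_def field_simps)
  have "?A * (?l - 1) * (?l - root_product g) = ?A * ?l^2 - ?A * ?l - ?A * root_product g * ?l + ?A * root_product g"
    by (simp add: power2_eq_square algebra_simps)
  also have "\<dots> = - ?B * ?l - ?A * ?l - ?C * ?l" using root product by (simp add: algebra_simps)
  also have "\<dots> = - (1 - a) * (g * (1 - a) + 3 * a) * ?l"
    by (simp add: char_coeff2_def char_coeff1_def char_coeff0_def power2_eq_square algebra_simps)
  finally show ?thesis .
qed

text \<open>Cramer's rule for \<open>K + c\<^sub>1 u\<^sub>1 + c\<^sub>2 u\<^sub>2 = 0 = K + c\<^sub>1 w\<^sub>1 + c\<^sub>2 w\<^sub>2\<close>: these are the two boundary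
  conditions at \<open>i = 0\<close> and \<open>i = N\<close> in \<open>discounted_operator_closed_form\<close>.\<close>

definition boundary_coeff1 :: "real \<Rightarrow> real \<Rightarrow> real \<Rightarrow> real \<Rightarrow> real \<Rightarrow> real" where
  "boundary_coeff1 K u1 u2 w1 w2 = - K * (w2 - u2) / (u1 * w2 - u2 * w1)"

definition boundary_coeff2 :: "real \<Rightarrow> real \<Rightarrow> real \<Rightarrow> real \<Rightarrow> real \<Rightarrow> real" where
  "boundary_coeff2 K u1 u2 w1 w2 = - K * (u1 - w1) / (u1 * w2 - u2 * w1)"

lemma boundary_coeffs_solve:
  assumes "u1 * w2 - u2 * w1 \<noteq> 0"
  shows "K + boundary_coeff1 K u1 u2 w1 w2 * u1 + boundary_coeff2 K u1 u2 w1 w2 * u2 = 0"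
    and "K + boundary_coeff1 K u1 u2 w1 w2 * w1 + boundary_coeff2 K u1 u2 w1 w2 * w2 = 0"
  using assms by (simp_all add: boundary_coeff1_def boundary_coeff2_def field_simps)

lemma boundary_coeffs_rescale:
  assumes "n \<noteq> 0"
  shows "boundary_coeff1 K (n * u1) u2 (n * w1) w2 = boundary_coeff1 K u1 u2 w1 w2 / n"
    and "boundary_coeff2 K (n * u1) u2 (n * w1) w2 = boundary_coeff2 K u1 u2 w1 w2"
proof -
  have "n * u1 * w2 - u2 * (n * w1) = n * (u1 * w2 - u2 * w1)" by (simp add: algebra_simps)
  then show "boundary_coeff1 K (n * u1) u2 (n * w1) w2 = boundary_coeff1 K u1 u2 w1 w2 / n"
    and "boundary_coeff2 K (n * u1) u2 (n * w1) w2 = boundary_coeff2 K u1 u2 w1 w2"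
    using assms by (simp_all add: boundary_coeff1_def boundary_coeff2_def right_diff_distrib[symmetric])
qed

definition nu_level :: "real \<Rightarrow> real \<Rightarrow> real" where
  "nu_level g a = 1 / (3 * a + g * (1 - a))"

definition nu_coeff1 :: "real \<Rightarrow> real \<Rightarrow> nat \<Rightarrow> real" where
  "nu_coeff1 g a N = boundary_coeff1 (nu_level g a) (1 / (root1 g a - a)) (1 / (root2 g a - a))
     (root1 g a ^ (N+1) / (1 - a * root1 g a)) (root2 g a ^ (N+1) / (1 - a * root2 g a))"

definition nu_coeff2 :: "real \<Rightarrow> real \<Rightarrow> nat \<Rightarrow> real" where
  "nu_coeff2 g a N = boundary_coeff2 (nu_level g a) (1 / (root1 g a - a)) (1 / (root2 g a - a))
     (root1 g a ^ (N+1) / (1 - a * root1 g a)) (root2 g a ^ (N+1) / (1 - a * root2 g a))"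

definition nu_closed :: "real \<Rightarrow> real \<Rightarrow> nat \<Rightarrow> nat \<Rightarrow> real" where
  "nu_closed g a N i = nu_level g a * (1 - a) + nu_coeff1 g a N * root1 g a ^ i + nu_coeff2 g a N * root2 g a ^ i"

lemma nu_closed_solves:
  assumes g: "g \<ge> 3/2" and a: "0 < a" "a < 1" and discr: "char_discr g a \<ge> 0"
    and l1: "root1 g a \<noteq> a" "a * root1 g a \<noteq> 1" and l2: "root2 g a \<noteq> a" "a * root2 g a \<noteq> 1"
    and "root1 g a \<noteq> 0"
    and det: "1 / (root1 g a - a) * (root2 g a ^ (N+1) / (1 - a * root2 g a))
              - 1 / (root2 g a - a) * (root1 g a ^ (N+1) / (1 - a * root1 g a)) \<noteq> 0"
    and "i \<le> N"
  shows "2 * past_sum a (nu_closed g a N) i + future_sum a N (nu_closed g a N) i + g * nu_closed g a N i = 1"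
proof -
  let ?K = "nu_level g a" and ?l1 = "root1 g a" and ?l2 = "root2 g a"
  have g1: "g > 1" using g by simp
  have const: "?K * (1 - a) * char_poly a g 1 / ((1 - a) * (1 - a)) = 1"
  proof -
    have "3 * a + g * (1 - a) > 0" using a g by (simp add: add_pos_nonneg)
    moreover have "char_poly a g 1 = (1 - a) * (3 * a + g * (1 - a))" by (simp add: char_poly_def algebra_simps)
    ultimately show ?thesis using a by (simp add: nu_level_def)
  qed
  have level: "?K * (1 - a) / (1 - a) = ?K" using a by simp
  note boundary = boundary_coeffs_solve[OF det, of ?K, folded nu_coeff1_def nu_coeff2_def]
  have left: "?K * (1 - a) / (1 - a) + nu_coeff1 g a N / (?l1 - a) + nu_coeff2 g a N / (?l2 - a) = 0"
    using boundary(1) unfolding level by simp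
  have right: "?K * (1 - a) / (1 - a) + nu_coeff1 g a N * ?l1^(N+1) / (1 - a * ?l1)
      + nu_coeff2 g a N * ?l2^(N+1) / (1 - a * ?l2) = 0"
    using boundary(2) unfolding level by simp
  show ?thesis
    unfolding nu_closed_def
    by (rule discounted_operator_closed_form[OF _ l1 l2 char_poly_root1[OF g1 a(1) discr]
          char_poly_root2[OF g1 a(1) discr \<open>root1 g a \<noteq> 0\<close>] const left right \<open>i \<le> N\<close>]) (use a in simp)
qed

definition omega_closed :: "real \<Rightarrow> real \<Rightarrow> nat \<Rightarrow> nat \<Rightarrow> real" where
  "omega_closed a b N i = (1 - a) / (b * (1 - a) + a) + a / (b * (b * (1 - a) + a)) * (a * (b - 1) / b) ^ (N - i)"

lemma omega_closed_solves:
  assumes a: "0 < a" "a < 1" and b: "b > 0" and "i \<le> N"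
  shows "future_sum a N (omega_closed a b N) i + b * omega_closed a b N i = 1"
proof -
  define d0 where "d0 = (1 - a) / (b * (1 - a) + a)"
  define d1 where "d1 = a / (b * (b * (1 - a) + a))"
  define m where "m = a * (b - 1) / b"
  have closed: "omega_closed a b N = (\<lambda>j. d0 + d1 * m^(N-j))"
    by (simp add: omega_closed_def d0_def d1_def m_def fun_eq_iff)
  have m: "m - a = - a / b" using b by (simp add: m_def field_simps)
  have const: "future_sum a N (\<lambda>j. 1) i = a * (1 - a^(N-i)) / (1 - a)"
    using future_sum_power[OF \<open>i \<le> N\<close>, of a 1] a by (simp add: field_simps)
  have "m - a \<noteq> 0" using a b m by simp
  then have geom: "future_sum a N (\<lambda>j. m^(N-j)) i = a * (m^(N-i) - a^(N-i)) / (m - a)"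
    using future_sum_reversed_power[OF \<open>i \<le> N\<close>, of m a] by (simp add: field_simps)
  have lin: "future_sum a N (\<lambda>j. d0 + d1 * m^(N-j)) i
      = d0 * future_sum a N (\<lambda>j. 1) i + d1 * future_sum a N (\<lambda>j. m^(N-j)) i"
    by (simp add: future_sum_def sum.distrib sum_distrib_left algebra_simps)
  have "u / w * (a * (1 - A) / u) + a / (b * w) * (a * (M - A) / (- a / b)) + b * (u / w + a / (b * w) * M) = 1"
    if "u \<noteq> 0" "w = b*u + a" "w \<noteq> 0" for u w A M :: real
  proof -
    have "u / w * (a * (1 - A) / u) + a / (b * w) * (a * (M - A) / (- a / b)) + b * (u / w + a / (b * w) * M)
        = (b*u + a) / w"
      using that(1,3) a b by (simp add: field_simps)
    then show ?thesis using that(2,3) by simp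
  qed
  moreover have "b * (1 - a) + a > 0" using a b by (simp add: add_pos_nonneg)
  ultimately have generic: "d0 * (a * (1 - a^(N-i)) / (1 - a)) + d1 * (a * (m^(N-i) - a^(N-i)) / (- a / b))
      + b * (d0 + d1 * m^(N-i)) = 1"
    unfolding d0_def d1_def using a by simp
  show ?thesis unfolding closed lin const geom m by (rule generic)
qed

lemma sum_atMost_reversed_power: "(\<Sum>i\<le>N. (m::real)^(N-i)) = (\<Sum>i\<le>N. m^i)"
  by (rule sum.reindex_bij_witness[where i="\<lambda>i. N - i" and j="\<lambda>i. N - i"]) auto

lemma sum_three_geometric:
  fixes c0 c1 c2 l1 l2 :: real
  shows "(\<Sum>i\<le>N. c0 + c1 * l1^i + c2 * l2^i) = (N+1) * c0 + c1 * (\<Sum>i\<le>N. l1^i) + c2 * (\<Sum>i\<le>N. l2^i)"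
  by (simp add: sum.distrib sum_distrib_left)

lemma sum_three_geometric_squared:
  fixes c0 c1 c2 l1 l2 :: real
  shows "(\<Sum>i\<le>N. (c0 + c1 * l1^i + c2 * l2^i)^2)
    = (N+1) * c0^2 + c1^2 * (\<Sum>i\<le>N. (l1^2)^i) + c2^2 * (\<Sum>i\<le>N. (l2^2)^i)
      + 2*c0*c1 * (\<Sum>i\<le>N. l1^i) + 2*c0*c2 * (\<Sum>i\<le>N. l2^i) + 2*c1*c2 * (\<Sum>i\<le>N. (l1*l2)^i)"
proof -
  have "(c0 + c1 * l1^i + c2 * l2^i)^2 = c0^2 + c1^2 * (l1^2)^i + c2^2 * (l2^2)^i
     + 2*c0*c1 * l1^i + 2*c0*c2 * l2^i + 2*c1*c2 * (l1*l2)^i" for i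
    by (simp add: power2_eq_square power_mult_distrib power_mult[symmetric] algebra_simps)
  then show ?thesis by (simp add: sum.distrib sum_distrib_left)
qed

lemma sum_omega_closed:
  fixes a b :: real
  defines "d0 \<equiv> (1 - a) / (b * (1 - a) + a)" and "d1 \<equiv> a / (b * (b * (1 - a) + a))" and "m \<equiv> a * (b - 1) / b"
  shows "(\<Sum>i\<le>N. omega_closed a b N i) = (real N + 1) * d0 + d1 * (\<Sum>i\<le>N. m^i)"
    and "(\<Sum>i\<le>N. (omega_closed a b N i)^2) = (real N + 1) * d0^2 + 2*d0*d1 * (\<Sum>i\<le>N. m^i) + d1^2 * (\<Sum>i\<le>N. (m^2)^i)"
proof -
  have closed: "omega_closed a b N i = d0 + d1 * m^(N-i)" for i
    by (simp add: omega_closed_def d0_def d1_def m_def)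
  have "(\<Sum>i\<le>N. omega_closed a b N i) = (real N + 1) * d0 + d1 * (\<Sum>i\<le>N. m^(N-i))"
    by (simp add: closed sum.distrib sum_distrib_left)
  then show "(\<Sum>i\<le>N. omega_closed a b N i) = (real N + 1) * d0 + d1 * (\<Sum>i\<le>N. m^i)"
    by (simp only: sum_atMost_reversed_power)
  have "(\<Sum>i\<le>N. (omega_closed a b N i)^2) = (\<Sum>i\<le>N. d0^2 + 2*d0*d1 * m^(N-i) + d1^2 * (m^2)^(N-i))"
    by (rule sum.cong) (auto simp: closed power2_eq_square power_mult_distrib algebra_simps)
  also have "\<dots> = (real N + 1) * d0^2 + 2*d0*d1 * (\<Sum>i\<le>N. m^(N-i)) + d1^2 * (\<Sum>i\<le>N. (m^2)^(N-i))"
    by (simp add: sum.distrib sum_distrib_left)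
  finally show "(\<Sum>i\<le>N. (omega_closed a b N i)^2) = (real N + 1) * d0^2 + 2*d0*d1 * (\<Sum>i\<le>N. m^i) + d1^2 * (\<Sum>i\<le>N. (m^2)^i)"
    by (simp only: sum_atMost_reversed_power)
qed

section \<open>Asymptotics on refining grids\<close>

lemma sum_atMost_power: "(x::real) \<noteq> 1 \<Longrightarrow> (\<Sum>i\<le>N. x^i) = (x^(N+1) - 1) / (x - 1)"
  by (simp add: sum_gp0 field_simps)

lemma tendsto_1_of_scaled_tendsto:
  assumes h: "filterlim h at_top sequentially"
    and scaled: "((\<lambda>k. real (h k) * (x k - 1)) \<longlongrightarrow> c) sequentially"
  shows "(x \<longlongrightarrow> 1) sequentially"
proof -
  have n: "filterlim (\<lambda>k. real (h k)) at_top sequentially"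
    using filterlim_compose[OF filterlim_real_sequentially h] .
  have "((\<lambda>k. inverse (real (h k)) * (real (h k) * (x k - 1)) + 1) \<longlongrightarrow> 0 * c + 1) sequentially"
    by (intro tendsto_intros tendsto_inverse_0_at_top[OF n] scaled)
  moreover have "eventually (\<lambda>k. inverse (real (h k)) * (real (h k) * (x k - 1)) + 1 = x k) sequentially"
    using filterlim_at_top_dense[THEN iffD1, OF n, rule_format, of 0]
    by eventually_elim (auto simp: field_simps)
  ultimately show ?thesis by (simp add: tendsto_cong)
qed

text \<open>The discrete version of \<open>(1 + c/n)\<^sup>n \<rightarrow> exp c\<close>, via \<open>(x - 1)/x \<le> ln x \<le> x - 1\<close>.\<close>

lemma power_tendsto_exp:
  assumes h: "filterlim h at_top sequentially"
    and scaled: "((\<lambda>k. real (h k) * (x k - 1)) \<longlongrightarrow> c) sequentially"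
    and pos: "eventually (\<lambda>k. x k > 0) sequentially"
  shows "((\<lambda>k. x k ^ h k) \<longlongrightarrow> exp c) sequentially"
proof -
  have "(x \<longlongrightarrow> 1) sequentially" by (rule tendsto_1_of_scaled_tendsto[OF h scaled])
  then have lower: "((\<lambda>k. real (h k) * (x k - 1) / x k) \<longlongrightarrow> c) sequentially"
    using tendsto_divide[OF scaled] by fastforce
  have ln_bounds: "real (h k) * (x k - 1) / x k \<le> real (h k) * ln (x k)
      \<and> real (h k) * ln (x k) \<le> real (h k) * (x k - 1)" if "x k > 0" for k
  proof -
    have "ln (1 / x k) \<le> 1 / x k - 1" using ln_le_minus_one that by simp
    then have "(x k - 1) / x k \<le> ln (x k)" using that by (simp add: ln_div field_simps)
    moreover have "ln (x k) \<le> x k - 1" using ln_le_minus_one that by blast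
    ultimately show ?thesis
      by (simp add: mult_left_mono times_divide_eq_right[symmetric] del: times_divide_eq_right)
  qed
  have "((\<lambda>k. real (h k) * ln (x k)) \<longlongrightarrow> c) sequentially"
    by (rule tendsto_sandwich[OF _ _ lower scaled]) (use pos ln_bounds in \<open>auto elim: eventually_mono\<close>)
  then have "((\<lambda>k. exp (real (h k) * ln (x k))) \<longlongrightarrow> exp c) sequentially"
    by (intro tendsto_intros)
  moreover have "eventually (\<lambda>k. exp (real (h k) * ln (x k)) = x k ^ h k) sequentially"
    using pos by eventually_elim (simp add: ln_realpow[symmetric])
  ultimately show ?thesis by (simp add: tendsto_cong)
qed

lemma scaled_one_minus_exp_tendsto:
  assumes h: "filterlim h at_top sequentially"
  shows "((\<lambda>k. real (h k) * (1 - exp (- r / real (h k)))) \<longlongrightarrow> r) sequentially"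
proof (cases "r = 0")
  case False
  have n: "filterlim (\<lambda>k. real (h k)) at_top sequentially"
    using filterlim_compose[OF filterlim_real_sequentially h] .
  have pos: "eventually (\<lambda>k. real (h k) > 0) sequentially"
    using filterlim_at_top_dense[THEN iffD1, OF n, rule_format, of 0] by simp
  have "((\<lambda>k. - r / real (h k)) \<longlongrightarrow> 0) sequentially"
    using tendsto_mult[OF tendsto_const tendsto_inverse_0_at_top[OF n], of "-r"] by (simp add: divide_inverse)
  then have "filterlim (\<lambda>k. - r / real (h k)) (at 0) sequentially"
    using pos False by (auto simp: filterlim_at eventually_mono)
  then have "((\<lambda>k. (exp (- r / real (h k)) - 1) / (- r / real (h k))) \<longlongrightarrow> 1) sequentially"
    using filterlim_compose[OF lim_exp_minus_1] by blast
  then have "((\<lambda>k. r * ((exp (- r / real (h k)) - 1) / (- r / real (h k)))) \<longlongrightarrow> r * 1) sequentially"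
    by (intro tendsto_intros)
  moreover have "eventually (\<lambda>k. r * ((exp (- r / real (h k)) - 1) / (- r / real (h k)))
      = real (h k) * (1 - exp (- r / real (h k)))) sequentially"
    using pos by eventually_elim (use False in \<open>auto simp: field_simps\<close>)
  ultimately show ?thesis by (simp add: tendsto_cong)
qed simp

text \<open>Limits of the boundary coefficients of \<open>\<nu>\<close>: \<open>E\<close> is the limit of \<open>root1\<^sup>N\<^sup>+\<^sup>1\<close> and \<open>s\<close> that of
  \<open>(root1 \<cdot> root2)\<^sup>N\<^sup>+\<^sup>1 = root_product\<^sup>N\<^sup>+\<^sup>1\<close>.\<close>

lemma boundary_coeff_limits:
  fixes p s E r :: real
  assumes p: "p < 1" and E: "E > 1" and r: "r > 0" and s: "\<bar>s\<bar> \<le> 1"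
  defines "w \<equiv> s / E / (1 - p)"
  shows "1 / (4 * r) * w - 1 / (p - 1) * (E / (- 2 * r)) = (s - 2 * E^2) / (4 * r * E * (1 - p))"
    and "boundary_coeff1 (1/3) (1 / (4 * r)) (1 / (p - 1)) (E / (- 2 * r)) w = 4 * r * (s + E) / (3 * (2 * E^2 - s))"
    and "boundary_coeff2 (1/3) (1 / (4 * r)) (1 / (p - 1)) (E / (- 2 * r)) w = E * (1 - p) * (1 + 2 * E) / (3 * (2 * E^2 - s))"
proof -
  define q where "q = 1 - p"
  have q: "q > 0" and pq: "p - 1 = - q" using p by (simp_all add: q_def)
  have "2 * E^2 > 1" using one_less_power[OF E, of 2] by simp
  then have sE: "2 * E^2 - s > 0" using s by (simp add: abs_le_iff)
  show det: "1 / (4 * r) * w - 1 / (p - 1) * (E / (- 2 * r)) = (s - 2 * E^2) / (4 * r * E * (1 - p))"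
    unfolding w_def pq q_def[symmetric] using q E r by (simp add: field_simps power2_eq_square)
  show "boundary_coeff1 (1/3) (1 / (4 * r)) (1 / (p - 1)) (E / (- 2 * r)) w = 4 * r * (s + E) / (3 * (2 * E^2 - s))"
    using det sE q E r unfolding boundary_coeff1_def w_def pq q_def[symmetric]
    by (simp add: field_simps)
  show "boundary_coeff2 (1/3) (1 / (4 * r)) (1 / (p - 1)) (E / (- 2 * r)) w = E * (1 - p) * (1 + 2 * E) / (3 * (2 * E^2 - s))"
    unfolding boundary_coeff2_def det using sE q E r by (simp add: q_def field_simps)
qed

lemma omega_ratio_abs_less_1:
  fixes a b :: real
  assumes "0 < a" "a < 1" "b > 1/2"
  shows "\<bar>a * (b - 1) / b\<bar> \<le> \<bar>(b - 1) / b\<bar>" and "\<bar>(b - 1) / b\<bar> < 1"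
proof -
  have "a * \<bar>(b - 1) / b\<bar> \<le> \<bar>(b - 1) / b\<bar>" by (rule mult_left_le_one_le) (use assms in auto)
  then show "\<bar>a * (b - 1) / b\<bar> \<le> \<bar>(b - 1) / b\<bar>" using assms by (simp add: abs_mult)
  show "\<bar>(b - 1) / b\<bar> < 1" using assms by (auto simp: abs_less_iff field_simps)
qed

text \<open>A sequence of grid sizes \<open>h k \<rightarrow> \<infinity>\<close> with \<open>\<rho> T = r\<close> and \<open>g = 3/2 + 2\<theta>\<close>. When \<open>\<theta> = 0\<close> the
  second root tends to \<open>root_product g = -1\<close>, so its powers only converge along subsequences
  of fixed parity; \<open>pow_lim\<close> is the limit of \<open>root_product g ^ h k\<close>.\<close>

locale refining_grid =
  fixes r g :: real and h :: "nat \<Rightarrow> nat" and pow_lim :: real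
  assumes r_pos: "r > 0" and g_ge: "g \<ge> 3/2" and h_at_top: "filterlim h at_top sequentially"
    and root_product_power: "((\<lambda>k. root_product g ^ h k) \<longlongrightarrow> pow_lim) sequentially"
begin

definition "steps k = real (h k)"
definition "dec k = exp (- r / steps k)"
definition "growth = exp (3 * r)"
definition "lam1 k = root1 g (dec k)"
definition "lam2 k = root2 g (dec k)"

lemma g_gt_1: "g > 1"
  using g_ge by simp

lemma root_product_range: "-1 \<le> root_product g" "root_product g < 1"
  using root_product_bounds[OF g_ge] by auto

lemma pow_lim_bound: "\<bar>pow_lim\<bar> \<le> 1"
proof (rule LIMSEQ_le_const2[OF tendsto_rabs[OF root_product_power]])
  show "\<exists>N. \<forall>k\<ge>N. \<bar>root_product g ^ h k\<bar> \<le> 1"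
    using root_product_range by (auto simp: power_abs intro!: power_le_one)
qed

lemma growth_gt_1: "growth > 1"
  using r_pos by (simp add: growth_def)

lemma eventually_steps_pos: "eventually (\<lambda>k. steps k > 0) sequentially"
  using h_at_top unfolding filterlim_at_top steps_def by (auto dest!: spec[of _ 1] elim: eventually_mono)

lemma eventually_dec_bounds: "eventually (\<lambda>k. 0 < dec k \<and> dec k < 1) sequentially"
  using eventually_steps_pos r_pos by (auto simp: dec_def elim!: eventually_mono)

lemma steps_one_minus_dec_tendsto: "((\<lambda>k. steps k * (1 - dec k)) \<longlongrightarrow> r) sequentially"
  unfolding steps_def dec_def by (rule scaled_one_minus_exp_tendsto[OF h_at_top])

lemma dec_tendsto: "(dec \<longlongrightarrow> 1) sequentially"
proof -
  have "((\<lambda>k. real (h k) * ((2 - dec k) - 1)) \<longlongrightarrow> r) sequentially"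
    using steps_one_minus_dec_tendsto by (simp add: steps_def)
  then have "((\<lambda>k. 2 - dec k) \<longlongrightarrow> 1) sequentially" by (rule tendsto_1_of_scaled_tendsto[OF h_at_top])
  then have "((\<lambda>k. 2 - (2 - dec k)) \<longlongrightarrow> 2 - 1) sequentially" by (intro tendsto_intros)
  then show ?thesis by simp
qed

lemma char_coeffs_tendsto:
  "((\<lambda>k. char_coeff2 g (dec k)) \<longlongrightarrow> char_coeff2 g 1) sequentially"
  "((\<lambda>k. char_coeff1 g (dec k)) \<longlongrightarrow> char_coeff1 g 1) sequentially"
  "((\<lambda>k. char_discr g (dec k)) \<longlongrightarrow> char_discr g 1) sequentially"
  unfolding char_discr_def discrim_def char_coeff2_def char_coeff1_def char_coeff0_def
  by (intro tendsto_intros dec_tendsto)+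

lemma eventually_char_discr_pos: "eventually (\<lambda>k. char_discr g (dec k) > 0) sequentially"
  using char_coeffs_tendsto(3) by (rule order_tendstoD) (simp add: char_discr_at_1)

lemma lam1_tendsto: "(lam1 \<longlongrightarrow> 1) sequentially"
proof -
  have "char_coeff2 g 1 \<noteq> 0" using g_gt_1 by (simp add: char_coeff2_def)
  then have "(lam1 \<longlongrightarrow> (- char_coeff1 g 1 - sqrt (char_discr g 1)) / (2 * char_coeff2 g 1)) sequentially"
    unfolding lam1_def root1_def by (intro tendsto_intros char_coeffs_tendsto) simp
  then show ?thesis using root1_at_1[OF g_gt_1] by (simp add: root1_def)
qed

lemma lam2_eq: "lam2 k = root_product g / lam1 k"
  by (simp add: lam2_def lam1_def root2_def)

lemma lam2_tendsto: "(lam2 \<longlongrightarrow> root_product g) sequentially"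
  using tendsto_divide[OF tendsto_const lam1_tendsto, of "root_product g"] by (simp add: lam2_eq[abs_def])

lemma eventually_lam1_pos: "eventually (\<lambda>k. lam1 k > 0) sequentially"
  using lam1_tendsto by (rule order_tendstoD) simp

text \<open>By \<open>root1_factorisation\<close>, \<open>root1 - 1\<close> is comparable to \<open>1 - dec \<approx> r / steps\<close>.\<close>

lemma steps_lam1_minus_1_tendsto: "((\<lambda>k. steps k * (lam1 k - 1)) \<longlongrightarrow> 3 * r) sequentially"
proof -
  let ?p = "root_product g"
  let ?f = "\<lambda>k. (steps k * (1 - dec k)) * (- (g * (1 - dec k) + 3 * dec k) * lam1 k
                 / (char_coeff2 g (dec k) * (lam1 k - ?p)))"
  have nz: "char_coeff2 g 1 \<noteq> 0" "1 - ?p \<noteq> 0" using g_gt_1 root_product_range by (auto simp: char_coeff2_def)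
  have "(?f \<longlongrightarrow> r * (- (g * (1 - 1) + 3 * 1) * 1 / (char_coeff2 g 1 * (1 - ?p)))) sequentially"
    by (intro tendsto_intros steps_one_minus_dec_tendsto dec_tendsto lam1_tendsto char_coeffs_tendsto) (use nz in simp)
  moreover have "r * (- (g * (1 - 1) + 3 * 1) * 1 / (char_coeff2 g 1 * (1 - ?p))) = 3 * r"
    using g_gt_1 by (simp add: char_coeff2_def root_product_def field_simps)
  moreover have "eventually (\<lambda>k. ?f k = steps k * (lam1 k - 1)) sequentially"
    using eventually_dec_bounds eventually_char_discr_pos order_tendstoD(1)[OF lam1_tendsto root_product_range(2)]
  proof eventually_elim
    case (elim k)
    have "char_coeff2 g (dec k) * (lam1 k - 1) * (lam1 k - ?p) = - (1 - dec k) * (g * (1 - dec k) + 3 * dec k) * lam1 k"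
      unfolding lam1_def by (rule root1_factorisation[OF g_gt_1]) (use elim in auto)
    moreover have "char_coeff2 g (dec k) * (lam1 k - ?p) \<noteq> 0" using elim g_gt_1 by (auto simp: char_coeff2_def)
    ultimately have "lam1 k - 1 = (1 - dec k) * (- (g * (1 - dec k) + 3 * dec k) * lam1 k)
        / (char_coeff2 g (dec k) * (lam1 k - ?p))"
      by (simp add: eq_divide_eq algebra_simps)
    then show ?case by (simp add: mult_ac)
  qed
  ultimately show ?thesis by (simp add: tendsto_cong)
qed

lemma lam1_power_tendsto: "((\<lambda>k. lam1 k ^ (h k + 1)) \<longlongrightarrow> growth) sequentially"
proof -
  have "((\<lambda>k. lam1 k ^ h k) \<longlongrightarrow> growth) sequentially"
    unfolding growth_def
    by (rule power_tendsto_exp[OF h_at_top steps_lam1_minus_1_tendsto[unfolded steps_def] eventually_lam1_pos])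
  then show ?thesis using tendsto_mult[OF lam1_tendsto] by fastforce
qed

lemma lam2_power_tendsto: "((\<lambda>k. lam2 k ^ (h k + 1)) \<longlongrightarrow> root_product g * pow_lim / growth) sequentially"
proof -
  have "((\<lambda>k. root_product g * root_product g ^ h k / lam1 k ^ (h k + 1))
      \<longlongrightarrow> root_product g * pow_lim / growth) sequentially"
    by (intro tendsto_intros root_product_power lam1_power_tendsto) (use growth_gt_1 in simp)
  moreover have "eventually (\<lambda>k. root_product g * root_product g ^ h k / lam1 k ^ (h k + 1)
      = lam2 k ^ (h k + 1)) sequentially"
    using eventually_lam1_pos by eventually_elim (simp add: lam2_eq power_divide)
  ultimately show ?thesis by (simp add: tendsto_cong)
qed

lemma steps_lam1_minus_dec_tendsto: "((\<lambda>k. steps k * (lam1 k - dec k)) \<longlongrightarrow> 4 * r) sequentially"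
proof -
  have "((\<lambda>k. steps k * (lam1 k - 1) + steps k * (1 - dec k)) \<longlongrightarrow> 3 * r + r) sequentially"
    by (intro tendsto_intros steps_lam1_minus_1_tendsto steps_one_minus_dec_tendsto)
  then show ?thesis by (simp add: algebra_simps)
qed

lemma steps_one_minus_dec_lam1_tendsto: "((\<lambda>k. steps k * (1 - dec k * lam1 k)) \<longlongrightarrow> - 2 * r) sequentially"
proof -
  have "((\<lambda>k. steps k * (1 - dec k) - dec k * (steps k * (lam1 k - 1))) \<longlongrightarrow> r - 1 * (3 * r)) sequentially"
    by (intro tendsto_intros steps_lam1_minus_1_tendsto steps_one_minus_dec_tendsto dec_tendsto)
  then show ?thesis by (simp add: algebra_simps)
qed

lemma steps_inverse_tendsto: "((\<lambda>k. 1 / steps k) \<longlongrightarrow> 0) sequentially"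
  using tendsto_inverse_0_at_top[OF filterlim_compose[OF filterlim_real_sequentially h_at_top]]
  by (simp add: steps_def divide_inverse)

lemma steps_ratio_tendsto: "((\<lambda>k. (steps k + 1) / steps k) \<longlongrightarrow> 1) sequentially"
proof -
  have "((\<lambda>k. 1 + 1 / steps k) \<longlongrightarrow> 1 + 0) sequentially" by (intro tendsto_intros steps_inverse_tendsto)
  moreover have "eventually (\<lambda>k. 1 + 1 / steps k = (steps k + 1) / steps k) sequentially"
    using eventually_steps_pos by eventually_elim (simp add: field_simps)
  ultimately show ?thesis by (simp add: tendsto_cong)
qed

definition "level k = nu_level g (dec k)"
definition "u1 k = 1 / (steps k * (lam1 k - dec k))"
definition "w1 k = lam1 k ^ (h k + 1) / (steps k * (1 - dec k * lam1 k))"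
definition "u2 k = 1 / (lam2 k - dec k)"
definition "w2 k = lam2 k ^ (h k + 1) / (1 - dec k * lam2 k)"
definition "coeff1 k = boundary_coeff1 (level k) (u1 k) (u2 k) (w1 k) (w2 k)"
definition "coeff2 k = boundary_coeff2 (level k) (u1 k) (u2 k) (w1 k) (w2 k)"

definition "w2_lim = root_product g * pow_lim / growth / (1 - root_product g)"
definition "coeff1_lim = boundary_coeff1 (1/3) (1 / (4 * r)) (1 / (root_product g - 1)) (growth / (- 2 * r)) w2_lim"
definition "coeff2_lim = boundary_coeff2 (1/3) (1 / (4 * r)) (1 / (root_product g - 1)) (growth / (- 2 * r)) w2_lim"

lemmas boundary_coeff_lims_eq = boundary_coeff_limits[OF root_product_range(2) growth_gt_1 r_pos,
  of "root_product g * pow_lim", folded w2_lim_def]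

lemma root_product_pow_lim_bound: "\<bar>root_product g * pow_lim\<bar> \<le> 1"
  using root_product_range pow_lim_bound by (simp add: abs_mult mult_le_one)

lemma boundary_det_lim_nonzero:
  "1 / (4 * r) * w2_lim - 1 / (root_product g - 1) * (growth / (- 2 * r)) \<noteq> 0"
proof -
  have "2 * growth^2 > 1" using one_less_power[OF growth_gt_1, of 2] by simp
  then show ?thesis
    unfolding boundary_coeff_lims_eq(1)[OF root_product_pow_lim_bound]
    using root_product_pow_lim_bound root_product_range growth_gt_1 r_pos by (auto simp: abs_le_iff)
qed

lemma boundary_data_tendsto:
  "(level \<longlongrightarrow> 1/3) sequentially"
  "(u1 \<longlongrightarrow> 1 / (4 * r)) sequentially"
  "(w1 \<longlongrightarrow> growth / (- 2 * r)) sequentially"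
  "(u2 \<longlongrightarrow> 1 / (root_product g - 1)) sequentially"
  "(w2 \<longlongrightarrow> w2_lim) sequentially"
proof -
  have "((\<lambda>k. 1 / (3 * dec k + g * (1 - dec k))) \<longlongrightarrow> 1 / (3 * 1 + g * (1 - 1))) sequentially"
    by (intro tendsto_intros dec_tendsto) simp
  then show "(level \<longlongrightarrow> 1/3) sequentially"
    by (simp add: level_def[abs_def] nu_level_def)
  show "(u1 \<longlongrightarrow> 1 / (4 * r)) sequentially"
    unfolding u1_def[abs_def] by (intro tendsto_intros steps_lam1_minus_dec_tendsto) (use r_pos in simp)
  show "(w1 \<longlongrightarrow> growth / (- 2 * r)) sequentially"
    unfolding w1_def[abs_def]
    by (intro tendsto_intros steps_one_minus_dec_lam1_tendsto lam1_power_tendsto) (use r_pos in simp)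
  show "(u2 \<longlongrightarrow> 1 / (root_product g - 1)) sequentially"
    unfolding u2_def[abs_def] by (intro tendsto_intros lam2_tendsto dec_tendsto) (use root_product_range in simp)
  have "(w2 \<longlongrightarrow> root_product g * pow_lim / growth / (1 - 1 * root_product g)) sequentially"
    unfolding w2_def[abs_def]
    by (intro tendsto_intros lam2_power_tendsto lam2_tendsto dec_tendsto) (use root_product_range in simp)
  then show "(w2 \<longlongrightarrow> w2_lim) sequentially"
    by (simp add: w2_lim_def)
qed

lemma coeffs_tendsto: "(coeff1 \<longlongrightarrow> coeff1_lim) sequentially" "(coeff2 \<longlongrightarrow> coeff2_lim) sequentially"
  unfolding coeff1_def[abs_def] coeff2_def[abs_def] coeff1_lim_def coeff2_lim_def
    boundary_coeff1_def boundary_coeff2_def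
  by (intro tendsto_intros boundary_data_tendsto boundary_det_lim_nonzero)+

lemma eventually_regular:
  "eventually (\<lambda>k. steps k > 0 \<and> 0 < dec k \<and> dec k < 1 \<and> char_discr g (dec k) > 0 \<and> lam1 k > 0
     \<and> u1 k * w2 k - u2 k * w1 k \<noteq> 0
     \<and> lam1 k \<noteq> 1 \<and> lam1 k \<noteq> dec k \<and> dec k * lam1 k \<noteq> 1
     \<and> lam2 k \<noteq> 1 \<and> lam2 k \<noteq> dec k \<and> dec k * lam2 k \<noteq> 1) sequentially"
proof -
  have "eventually (\<lambda>k. u1 k * w2 k - u2 k * w1 k \<noteq> 0) sequentially"
    by (rule tendsto_imp_eventually_ne[OF _ boundary_det_lim_nonzero])
       (intro tendsto_intros boundary_data_tendsto)
  moreover have "eventually (\<lambda>k. steps k * (lam1 k - 1) > 0) sequentially"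
    using steps_lam1_minus_1_tendsto by (rule order_tendstoD) (use r_pos in simp)
  moreover have "eventually (\<lambda>k. steps k * (lam1 k - dec k) > 0) sequentially"
    using steps_lam1_minus_dec_tendsto by (rule order_tendstoD) (use r_pos in simp)
  moreover have "eventually (\<lambda>k. steps k * (1 - dec k * lam1 k) < 0) sequentially"
    using steps_one_minus_dec_lam1_tendsto by (rule order_tendstoD) (use r_pos in simp)
  moreover have "eventually (\<lambda>k. lam2 k - dec k < 0) sequentially"
    by (rule order_tendstoD[OF tendsto_diff[OF lam2_tendsto dec_tendsto]]) (use root_product_range in simp)
  moreover have "eventually (\<lambda>k. lam2 k < 1) sequentially"
    by (rule order_tendstoD[OF lam2_tendsto]) (use root_product_range in simp)
  moreover have "eventually (\<lambda>k. 1 - dec k * lam2 k > 0) sequentially"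
    by (rule order_tendstoD[OF tendsto_diff[OF tendsto_const tendsto_mult[OF dec_tendsto lam2_tendsto]]])
       (use root_product_range in simp)
  ultimately show ?thesis
    using eventually_steps_pos eventually_dec_bounds eventually_char_discr_pos eventually_lam1_pos
    by eventually_elim auto
qed

lemma nu_coeffs_rescaled:
  assumes "steps k > 0" "lam1 k \<noteq> dec k" "dec k * lam1 k \<noteq> 1"
  shows "nu_coeff1 g (dec k) (h k) = coeff1 k / steps k" and "nu_coeff2 g (dec k) (h k) = coeff2 k"
proof -
  have "1 / (root1 g (dec k) - dec k) = steps k * u1 k"
    and "root1 g (dec k) ^ (h k + 1) / (1 - dec k * root1 g (dec k)) = steps k * w1 k"
    using assms by (simp_all add: u1_def w1_def lam1_def)
  then show "nu_coeff1 g (dec k) (h k) = coeff1 k / steps k" and "nu_coeff2 g (dec k) (h k) = coeff2 k"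
    unfolding nu_coeff1_def nu_coeff2_def coeff1_def coeff2_def
    using boundary_coeffs_rescale[of "steps k"] assms(1)
    by (simp_all add: u2_def w2_def lam2_def level_def)
qed

lemma nu_closed_solves_eventually:
  "eventually (\<lambda>k. \<forall>i \<le> h k. 2 * past_sum (dec k) (nu_closed g (dec k) (h k)) i
     + future_sum (dec k) (h k) (nu_closed g (dec k) (h k)) i + g * nu_closed g (dec k) (h k) i = 1) sequentially"
  using eventually_regular
proof eventually_elim
  case (elim k)
  have "steps k * u1 k = 1 / (root1 g (dec k) - dec k)"
    and "steps k * w1 k = root1 g (dec k) ^ (h k + 1) / (1 - dec k * root1 g (dec k))"
    using elim by (simp_all add: u1_def w1_def lam1_def)
  moreover have "steps k * (u1 k * w2 k - u2 k * w1 k) = (steps k * u1 k) * w2 k - u2 k * (steps k * w1 k)"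
    by (simp add: algebra_simps)
  ultimately have "1 / (root1 g (dec k) - dec k) * (root2 g (dec k) ^ (h k + 1) / (1 - dec k * root2 g (dec k)))
      - 1 / (root2 g (dec k) - dec k) * (root1 g (dec k) ^ (h k + 1) / (1 - dec k * root1 g (dec k)))
      = steps k * (u1 k * w2 k - u2 k * w1 k)"
    by (simp add: u2_def w2_def lam2_def)
  then have "1 / (root1 g (dec k) - dec k) * (root2 g (dec k) ^ (h k + 1) / (1 - dec k * root2 g (dec k)))
      - 1 / (root2 g (dec k) - dec k) * (root1 g (dec k) ^ (h k + 1) / (1 - dec k * root1 g (dec k))) \<noteq> 0"
    using elim by simp
  then show ?case
    using elim by (auto intro!: nu_closed_solves[OF g_ge] simp: lam1_def lam2_def)
qed

definition "nu_sum_approx k = (steps k + 1) / steps k * level k * (steps k * (1 - dec k))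
   + coeff1 k * (lam1 k ^ (h k + 1) - 1) / (steps k * (lam1 k - 1))
   + coeff2 k * (lam2 k ^ (h k + 1) - 1) / (lam2 k - 1)"

definition "nu_sum_lim = r / 3 + coeff1_lim * (growth - 1) / (3 * r)
   + coeff2_lim * (root_product g * pow_lim / growth - 1) / (root_product g - 1)"

lemma nu_sum_approx_tendsto: "(nu_sum_approx \<longlongrightarrow> nu_sum_lim) sequentially"
proof -
  have "(nu_sum_approx \<longlongrightarrow> 1 * (1/3) * r + coeff1_lim * (growth - 1) / (3 * r)
      + coeff2_lim * (root_product g * pow_lim / growth - 1) / (root_product g - 1)) sequentially"
    unfolding nu_sum_approx_def[abs_def]
    by (intro tendsto_intros steps_ratio_tendsto boundary_data_tendsto steps_one_minus_dec_tendsto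
        coeffs_tendsto lam1_power_tendsto steps_lam1_minus_1_tendsto lam2_power_tendsto lam2_tendsto)
       (use r_pos root_product_range in auto)
  then show ?thesis by (simp add: nu_sum_lim_def)
qed

lemma sum_nu_closed_eventually:
  "eventually (\<lambda>k. (\<Sum>i\<le>h k. nu_closed g (dec k) (h k) i) = nu_sum_approx k) sequentially"
  using eventually_regular
proof eventually_elim
  case (elim k)
  have coeffs: "nu_coeff1 g (dec k) (h k) = coeff1 k / steps k" "nu_coeff2 g (dec k) (h k) = coeff2 k"
    using nu_coeffs_rescaled elim by auto
  have "(\<Sum>i\<le>h k. nu_closed g (dec k) (h k) i)
      = (real (h k) + 1) * (level k * (1 - dec k))
        + nu_coeff1 g (dec k) (h k) * ((lam1 k ^ (h k + 1) - 1) / (lam1 k - 1))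
        + nu_coeff2 g (dec k) (h k) * ((lam2 k ^ (h k + 1) - 1) / (lam2 k - 1))"
    unfolding nu_closed_def sum_three_geometric using elim
    by (simp add: sum_atMost_power lam1_def lam2_def level_def)
  also have "\<dots> = nu_sum_approx k"
  proof -
    have "(real (h k) + 1) * (level k * (1 - dec k)) = (steps k + 1) / steps k * level k * (steps k * (1 - dec k))"
      using elim by (simp add: steps_def)
    then show ?thesis unfolding coeffs nu_sum_approx_def by simp
  qed
  finally show ?case .
qed

definition "nu_sqsum_approx k = (steps k + 1) / steps k * (level k * (steps k * (1 - dec k))) * (level k * (1 - dec k))
   + (coeff1 k)^2 * ((lam1 k ^ (h k + 1))^2 - 1) / ((steps k * (lam1 k - 1)) * (lam1 k + 1)) * (1 / steps k)
   + (coeff2 k)^2 * ((lam2 k ^ (h k + 1))^2 - 1) / ((lam2 k)^2 - 1)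
   + 2 * (level k * (1 - dec k)) * coeff1 k * (lam1 k ^ (h k + 1) - 1) / (steps k * (lam1 k - 1))
   + 2 * (level k * (1 - dec k)) * coeff2 k * (lam2 k ^ (h k + 1) - 1) / (lam2 k - 1)
   + 2 * coeff1 k * coeff2 k * (root_product g * root_product g ^ h k - 1) / (root_product g - 1) * (1 / steps k)"

definition "nu_sqsum_lim = coeff2_lim^2 * ((root_product g * pow_lim / growth)^2 - 1) / ((root_product g)^2 - 1)"

lemma root_product_abs_less_1: "g > 3/2 \<Longrightarrow> \<bar>root_product g\<bar> < 1"
  by (auto simp: root_product_def abs_less_iff field_simps)

lemma nu_sqsum_approx_tendsto:
  assumes "g > 3/2"
  shows "(nu_sqsum_approx \<longlongrightarrow> nu_sqsum_lim) sequentially"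
proof -
  have p: "\<bar>root_product g\<bar> < 1" by (rule root_product_abs_less_1[OF assms])
  then have "(root_product g)^2 - 1 \<noteq> 0" "root_product g - 1 \<noteq> 0"
    using abs_square_less_1[of "root_product g"] by auto
  then have "(nu_sqsum_approx \<longlongrightarrow> 1 * ((1/3) * r) * ((1/3) * (1 - 1))
     + coeff1_lim^2 * (growth^2 - 1) / ((3 * r) * (1 + 1)) * 0
     + coeff2_lim^2 * ((root_product g * pow_lim / growth)^2 - 1) / ((root_product g)^2 - 1)
     + 2 * ((1/3) * (1 - 1)) * coeff1_lim * (growth - 1) / (3 * r)
     + 2 * ((1/3) * (1 - 1)) * coeff2_lim * (root_product g * pow_lim / growth - 1) / (root_product g - 1)
     + 2 * coeff1_lim * coeff2_lim * (root_product g * pow_lim - 1) / (root_product g - 1) * 0) sequentially"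
    unfolding nu_sqsum_approx_def[abs_def]
    by (intro tendsto_intros steps_ratio_tendsto boundary_data_tendsto steps_one_minus_dec_tendsto dec_tendsto
        coeffs_tendsto lam1_power_tendsto steps_lam1_minus_1_tendsto lam1_tendsto lam2_power_tendsto
        lam2_tendsto steps_inverse_tendsto root_product_power)
       (use r_pos in auto)
  then show ?thesis by (simp add: nu_sqsum_lim_def)
qed

lemma sum_nu_closed_squared_eventually:
  assumes "g > 3/2"
  shows "eventually (\<lambda>k. (\<Sum>i\<le>h k. (nu_closed g (dec k) (h k) i)^2) = nu_sqsum_approx k) sequentially"
proof -
  have "eventually (\<lambda>k. \<bar>lam2 k\<bar> < 1) sequentially"
    by (rule order_tendstoD(2)[OF tendsto_rabs[OF lam2_tendsto] root_product_abs_less_1[OF assms]])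
  with eventually_regular show ?thesis
  proof eventually_elim
    case (elim k)
    let ?c1 = "nu_coeff1 g (dec k) (h k)" and ?c2 = "nu_coeff2 g (dec k) (h k)" and ?c0 = "level k * (1 - dec k)"
    and ?p = "root_product g" and ?n = "h k + 1"
    have coeffs: "?c1 = coeff1 k / steps k" "?c2 = coeff2 k"
      using nu_coeffs_rescaled elim by auto
    have "lam1 k * lam2 k = ?p" using elim by (simp add: lam2_eq)
    moreover have "(lam1 k)^2 \<noteq> 1" "(lam2 k)^2 \<noteq> 1" "?p \<noteq> 1"
      using elim abs_square_less_1[of "lam2 k"] root_product_range by (auto simp: power2_eq_1_iff)
    ultimately have "(\<Sum>i\<le>h k. (nu_closed g (dec k) (h k) i)^2)
        = (real (h k) + 1) * ?c0^2 + ?c1^2 * ((((lam1 k)^2) ^ ?n - 1) / ((lam1 k)^2 - 1))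
          + ?c2^2 * ((((lam2 k)^2) ^ ?n - 1) / ((lam2 k)^2 - 1))
          + 2 * ?c0 * ?c1 * ((lam1 k ^ ?n - 1) / (lam1 k - 1)) + 2 * ?c0 * ?c2 * ((lam2 k ^ ?n - 1) / (lam2 k - 1))
          + 2 * ?c1 * ?c2 * ((?p ^ ?n - 1) / (?p - 1))"
      using elim unfolding nu_closed_def sum_three_geometric_squared
      by (simp add: sum_atMost_power lam1_def lam2_def level_def)
    also have "\<dots> = nu_sqsum_approx k"
    proof -
      have square_power: "((x::real)^2)^n = (x^n)^2" for x n by (metis power_mult mult.commute)
      have const_sq: "(real (h k) + 1) * ?c0^2 = (steps k + 1) / steps k * (level k * (steps k * (1 - dec k))) * ?c0"
        using elim by (simp add: steps_def power2_eq_square)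
      have root1_sq: "(coeff1 k / steps k)^2 * ((((lam1 k)^2) ^ ?n - 1) / ((lam1 k)^2 - 1))
          = (coeff1 k)^2 * ((lam1 k ^ ?n)^2 - 1) / ((steps k * (lam1 k - 1)) * (lam1 k + 1)) * (1 / steps k)"
      proof -
        have "(lam1 k)^2 - 1 = (lam1 k - 1) * (lam1 k + 1)" by (simp add: power2_eq_square algebra_simps)
        then show ?thesis by (simp add: square_power power_divide power2_eq_square power_mult_distrib mult_ac)
      qed
      have root2_sq: "(coeff2 k)^2 * ((((lam2 k)^2) ^ ?n - 1) / ((lam2 k)^2 - 1))
          = (coeff2 k)^2 * ((lam2 k ^ ?n)^2 - 1) / ((lam2 k)^2 - 1)"
        by (simp only: square_power times_divide_eq_right)
      have const_root1: "2 * ?c0 * (coeff1 k / steps k) * ((lam1 k ^ ?n - 1) / (lam1 k - 1))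
          = 2 * ?c0 * coeff1 k * (lam1 k ^ ?n - 1) / (steps k * (lam1 k - 1))"
        by simp
      have const_root2: "2 * ?c0 * coeff2 k * ((lam2 k ^ ?n - 1) / (lam2 k - 1))
          = 2 * ?c0 * coeff2 k * (lam2 k ^ ?n - 1) / (lam2 k - 1)"
        by simp
      have roots_product: "2 * (coeff1 k / steps k) * coeff2 k * ((?p ^ ?n - 1) / (?p - 1))
          = 2 * coeff1 k * coeff2 k * (?p * ?p ^ h k - 1) / (?p - 1) * (1 / steps k)"
        by simp
      show ?thesis unfolding coeffs const_sq root1_sq root2_sq const_root1 const_root2 roots_product nu_sqsum_approx_def ..
    qed
    finally show ?case .
  qed
qed

lemma omega_ratio_power_tendsto:
  assumes "b > 1/2"
  shows "((\<lambda>k. (dec k * (b - 1) / b) ^ (h k + 1)) \<longlongrightarrow> 0) sequentially"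
proof (rule tendsto_0_le[where K = 1])
  have ratio: "\<bar>(b - 1) / b\<bar> < 1" using assms by (auto simp: abs_less_iff field_simps)
  then show "((\<lambda>k. \<bar>(b - 1) / b\<bar> ^ h k) \<longlongrightarrow> 0) sequentially"
    using filterlim_compose[OF LIMSEQ_power_zero[of "\<bar>(b - 1) / b\<bar>"] h_at_top] by simp
  show "eventually (\<lambda>k. norm ((dec k * (b - 1) / b) ^ (h k + 1)) \<le> norm (\<bar>(b - 1) / b\<bar> ^ h k) * 1) sequentially"
    using eventually_dec_bounds
  proof eventually_elim
    case (elim k)
    then have "\<bar>dec k * (b - 1) / b\<bar> ^ (h k + 1) \<le> \<bar>(b - 1) / b\<bar> ^ (h k + 1)"
      using omega_ratio_abs_less_1(1) assms by (intro power_mono) auto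
    also have "\<dots> \<le> \<bar>(b - 1) / b\<bar> ^ h k" by (rule power_decreasing) (use ratio in auto)
    finally show ?case by (simp only: real_norm_def power_abs mult_1_right abs_abs)
  qed
qed

definition "omega_sum_approx b k = (steps k + 1) / steps k * (steps k * (1 - dec k)) / (b * (1 - dec k) + dec k)
   + dec k / (b * (b * (1 - dec k) + dec k)) * ((dec k * (b - 1) / b) ^ (h k + 1) - 1) / (dec k * (b - 1) / b - 1)"

definition "omega_sqsum_approx b k = (steps k + 1) / steps k * (steps k * (1 - dec k)) / (b * (1 - dec k) + dec k)
     * ((1 - dec k) / (b * (1 - dec k) + dec k))
   + 2 * ((1 - dec k) / (b * (1 - dec k) + dec k)) * (dec k / (b * (b * (1 - dec k) + dec k)))
     * ((dec k * (b - 1) / b) ^ (h k + 1) - 1) / (dec k * (b - 1) / b - 1)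
   + (dec k / (b * (b * (1 - dec k) + dec k)))^2
     * (((dec k * (b - 1) / b) ^ (h k + 1))^2 - 1) / ((dec k * (b - 1) / b)^2 - 1)"

lemma omega_sum_approx_tendsto:
  assumes b: "b > 1/2"
  shows "(omega_sum_approx b \<longlongrightarrow> r + 1) sequentially"
proof -
  have ratio: "1 * (b - 1) / b - 1 \<noteq> 0" using b by (simp add: field_simps)
  have "(omega_sum_approx b \<longlongrightarrow> 1 * r / (b * (1 - 1) + 1)
      + 1 / (b * (b * (1 - 1) + 1)) * (0 - 1) / (1 * (b - 1) / b - 1)) sequentially"
    unfolding omega_sum_approx_def[abs_def]
    by (intro tendsto_intros steps_ratio_tendsto steps_one_minus_dec_tendsto dec_tendsto
        omega_ratio_power_tendsto[OF b]) (use b ratio in auto)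
  then show ?thesis using b by (simp add: field_simps)
qed

lemma omega_sqsum_approx_tendsto:
  assumes b: "b > 1/2"
  shows "(omega_sqsum_approx b \<longlongrightarrow> 1 / (2 * b - 1)) sequentially"
proof -
  have ratio: "1 * (b - 1) / b - 1 \<noteq> 0" "(1 * (b - 1) / b)^2 - 1 \<noteq> 0"
    using b by (auto simp: field_simps power2_eq_square)
  have "(omega_sqsum_approx b \<longlongrightarrow> 1 * r / (b * (1 - 1) + 1) * ((1 - 1) / (b * (1 - 1) + 1))
      + 2 * ((1 - 1) / (b * (1 - 1) + 1)) * (1 / (b * (b * (1 - 1) + 1))) * (0 - 1) / (1 * (b - 1) / b - 1)
      + (1 / (b * (b * (1 - 1) + 1)))^2 * (0^2 - 1) / ((1 * (b - 1) / b)^2 - 1)) sequentially"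
    unfolding omega_sqsum_approx_def[abs_def]
    by (intro tendsto_intros steps_ratio_tendsto steps_one_minus_dec_tendsto dec_tendsto
        omega_ratio_power_tendsto[OF b]) (use b ratio in auto)
  moreover have "(1 / b)^2 * (0^2 - 1) / (((b - 1) / b)^2 - 1) = 1 / (2 * b - 1)"
    using b by (simp add: field_simps power2_eq_square)
  ultimately show ?thesis by simp
qed

lemma sum_omega_closed_eventually:
  assumes b: "b > 1/2"
  shows "eventually (\<lambda>k. (\<Sum>i\<le>h k. omega_closed (dec k) b (h k) i) = omega_sum_approx b k
     \<and> (\<Sum>i\<le>h k. (omega_closed (dec k) b (h k) i)^2) = omega_sqsum_approx b k) sequentially"
  using eventually_steps_pos eventually_dec_bounds
proof eventually_elim
  case (elim k)
  let ?m = "dec k * (b - 1) / b"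
  have "\<bar>?m\<bar> < 1"
    using omega_ratio_abs_less_1[of "dec k" b] b elim by linarith
  then have m: "?m \<noteq> 1" "?m^2 \<noteq> 1" using abs_square_less_1[of ?m] by auto
  have steps: "real (h k) + 1 = (steps k + 1) / steps k * steps k" using elim by (simp add: steps_def)
  have square_power: "((x::real)^2)^n = (x^n)^2" for x n by (metis power_mult mult.commute)
  show ?case
    unfolding sum_omega_closed sum_atMost_power[OF m(1)] sum_atMost_power[OF m(2)] square_power steps
      omega_sum_approx_def omega_sqsum_approx_def
    by (simp add: power2_eq_square mult_ac)
qed

lemma decay_eq_dec: "r = \<rho> * T \<Longrightarrow> decay \<rho> T (h k) = dec k"
  unfolding decay_def dec_def steps_def by simp

lemma nu_eventually_eq_nu_closed:
  assumes "\<rho> > 0" "T > 0" "\<theta> \<ge> 0" "r = \<rho> * T" "g = 3/2 + 2*\<theta>"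
  shows "eventually (\<lambda>k. \<forall>i \<le> h k. nu \<rho> T \<theta> (h k) $ i = nu_closed g (dec k) (h k) i) sequentially"
  using nu_closed_solves_eventually eventually_steps_pos
proof eventually_elim
  case (elim k)
  then have "h k > 0" by (simp add: steps_def)
  then show ?case
    using nu_solves(3)[OF assms(1,2) _ assms(3)] elim(1) decay_eq_dec[OF assms(4)] assms(5) by auto
qed

lemma nu_sum_tendsto:
  assumes "\<rho> > 0" "T > 0" "\<theta> \<ge> 0" "r = \<rho> * T" "g = 3/2 + 2*\<theta>"
  shows "((\<lambda>k. nu_sum \<rho> T \<theta> (h k)) \<longlongrightarrow> nu_sum_lim) sequentially"
proof (rule Lim_transform_eventually[OF nu_sum_approx_tendsto])
  show "eventually (\<lambda>k. nu_sum_approx k = nu_sum \<rho> T \<theta> (h k)) sequentially"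
    using nu_eventually_eq_nu_closed[OF assms] sum_nu_closed_eventually
    by eventually_elim (simp add: nu_sum_def)
qed

lemma nu_sqsum_tendsto:
  assumes "\<rho> > 0" "T > 0" "\<theta> > 0" "r = \<rho> * T" "g = 3/2 + 2*\<theta>"
  shows "((\<lambda>k. nu_sqsum \<rho> T \<theta> (h k)) \<longlongrightarrow> nu_sqsum_lim) sequentially"
proof (rule Lim_transform_eventually[OF nu_sqsum_approx_tendsto])
  show "g > 3/2" using assms by simp
  show "eventually (\<lambda>k. nu_sqsum_approx k = nu_sqsum \<rho> T \<theta> (h k)) sequentially"
    using nu_eventually_eq_nu_closed[OF assms(1,2) less_imp_le[OF assms(3)] assms(4,5)]
      sum_nu_closed_squared_eventually[OF \<open>g > 3/2\<close>]
    by eventually_elim (simp add: nu_sqsum_def)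
qed

lemma omega_sums_tendsto:
  assumes "\<rho> > 0" "T > 0" "\<theta> > 0" "r = \<rho> * T"
  shows "((\<lambda>k. omega_sum \<rho> T \<theta> (h k)) \<longlongrightarrow> r + 1) sequentially"
    and "((\<lambda>k. omega_sqsum \<rho> T \<theta> (h k)) \<longlongrightarrow> 1 / (4 * \<theta>)) sequentially"
proof -
  have b: "1/2 + 2*\<theta> > 1/2" using assms by simp
  have "eventually (\<lambda>k. \<forall>i \<le> h k. omega \<rho> T \<theta> (h k) $ i = omega_closed (dec k) (1/2 + 2*\<theta>) (h k) i) sequentially"
    using eventually_steps_pos eventually_dec_bounds
  proof eventually_elim
    case (elim k)
    then have "h k > 0" by (simp add: steps_def)
    then show ?case
      using omega_solves(2)[OF assms(1,2) _ less_imp_le[OF assms(3)]] omega_closed_solves[of "dec k" "1/2 + 2*\<theta>"]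
        elim assms(3) decay_eq_dec[OF assms(4)] by auto
  qed
  then have "eventually (\<lambda>k. omega_sum_approx (1/2 + 2*\<theta>) k = omega_sum \<rho> T \<theta> (h k)
      \<and> omega_sqsum_approx (1/2 + 2*\<theta>) k = omega_sqsum \<rho> T \<theta> (h k)) sequentially"
    using sum_omega_closed_eventually[OF b] by eventually_elim (simp add: omega_sum_def omega_sqsum_def)
  then have sums: "eventually (\<lambda>k. omega_sum_approx (1/2 + 2*\<theta>) k = omega_sum \<rho> T \<theta> (h k)) sequentially"
    "eventually (\<lambda>k. omega_sqsum_approx (1/2 + 2*\<theta>) k = omega_sqsum \<rho> T \<theta> (h k)) sequentially"
    by (auto elim: eventually_mono)
  show "((\<lambda>k. omega_sum \<rho> T \<theta> (h k)) \<longlongrightarrow> r + 1) sequentially"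
    by (rule Lim_transform_eventually[OF omega_sum_approx_tendsto[OF b] sums(1)])
  show "((\<lambda>k. omega_sqsum \<rho> T \<theta> (h k)) \<longlongrightarrow> 1 / (4 * \<theta>)) sequentially"
    using Lim_transform_eventually[OF omega_sqsum_approx_tendsto[OF b] sums(2)] by simp
qed

lemma nu_sum_lim_eq:
  defines "s \<equiv> root_product g * pow_lim"
  shows "nu_sum_lim = r/3 + (4 * (s + growth) * (growth - 1) + 3 * (1 + 2 * growth) * (growth - s))
                           / (9 * (2 * growth^2 - s))"
proof -
  define q where "q = 1 - root_product g"
  define w where "w = 2 * growth^2 - s"
  have q: "q > 0" using root_product_range by (simp add: q_def)
  have "2 * growth^2 > 1" using one_less_power[OF growth_gt_1, of 2] by simp
  then have w: "w > 0" using root_product_pow_lim_bound by (simp add: w_def s_def abs_le_iff)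
  have "r/3 + 4 * r * (s + growth) / (3 * w) * (growth - 1) / (3 * r)
      + growth * q * (1 + 2 * growth) / (3 * w) * (s / growth - 1) / (- q)
      = r/3 + (4 * (s + growth) * (growth - 1) + 3 * (1 + 2 * growth) * (growth - s)) / (9 * w)"
    using w q growth_gt_1 r_pos by (simp add: field_simps)
  then show ?thesis
    unfolding nu_sum_lim_def coeff1_lim_def coeff2_lim_def
      boundary_coeff_lims_eq(2,3)[OF root_product_pow_lim_bound]
    by (simp add: s_def w_def q_def)
qed

end

lemma refining_grid_taxed:
  assumes "r > 0" "\<theta> > 0"
  shows "refining_grid r (3/2 + 2*\<theta>) id 0"
proof
  have "\<bar>root_product (3/2 + 2*\<theta>)\<bar> < 1"
    using assms(2) by (auto simp: root_product_def abs_less_iff field_simps)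
  then show "(\<lambda>k. root_product (3/2 + 2*\<theta>) ^ id k) \<longlonglongrightarrow> 0"
    by (simp add: LIMSEQ_power_zero)
  show "filterlim id at_top sequentially" unfolding id_def by (rule filterlim_ident)
qed (use assms in auto)

lemma refining_grid_untaxed:
  assumes "r > 0"
  shows "refining_grid r (3/2) (\<lambda>n. 2*n) 1" and "refining_grid r (3/2) (\<lambda>n. 2*n+1) (-1)"
proof -
  have "strict_mono (\<lambda>n::nat. 2*n)" "strict_mono (\<lambda>n::nat. 2*n+1)" by (auto intro!: strict_monoI)
  then show "refining_grid r (3/2) (\<lambda>n. 2*n) 1" and "refining_grid r (3/2) (\<lambda>n. 2*n+1) (-1)"
    by (unfold_locales; use assms filterlim_subseq in \<open>simp add: root_product_def\<close>)+
qed

lemma taxed_sum_limits: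
  fixes \<rho> T \<theta> :: real
  assumes "\<rho> > 0" "T > 0" "\<theta> > 0"
  defines "E \<equiv> exp (3 * (\<rho> * T))"
  shows "nu_sum \<rho> T \<theta> \<longlonglongrightarrow> (6 * (\<rho> * T) * E + 10 * E - 1) / (18 * E)"
    and "(\<lambda>N. \<theta> * nu_sqsum \<rho> T \<theta> N) \<longlonglongrightarrow> (1 + 2 * E)^2 / (144 * E^2)"
    and "omega_sum \<rho> T \<theta> \<longlonglongrightarrow> \<rho> * T + 1"
    and "(\<lambda>N. \<theta> * omega_sqsum \<rho> T \<theta> N) \<longlonglongrightarrow> 1/4"
proof -
  interpret refining_grid "\<rho> * T" "3/2 + 2*\<theta>" id 0
    by (rule refining_grid_taxed) (use assms in auto)
  let ?p = "root_product (3/2 + 2*\<theta>)"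
  have E: "growth = E" "E > 0" by (simp_all add: growth_def E_def)
  have p: "1 - ?p = 2 / (4*\<theta> + 1)" "1 + ?p = 8 * \<theta> / (4*\<theta> + 1)"
    using assms(3) by (simp_all add: root_product_def field_simps)
  have "nu_sum_lim = (6 * (\<rho> * T) * E + 10 * E - 1) / (18 * E)"
    unfolding nu_sum_lim_eq E(1) using E(2) by (simp add: field_simps power2_eq_square)
  then show "nu_sum \<rho> T \<theta> \<longlonglongrightarrow> (6 * (\<rho> * T) * E + 10 * E - 1) / (18 * E)"
    using nu_sum_tendsto[OF assms(1,2) _ refl refl] assms(3) by simp
  have "coeff2_lim = growth * (1 - ?p) * (1 + 2 * growth) / (3 * (2 * growth^2 - ?p * 0))"
    unfolding coeff2_lim_def by (rule boundary_coeff_lims_eq(3)[OF root_product_pow_lim_bound])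
  also have "\<dots> = (1 - ?p) * (1 + 2 * E) / (6 * E)"
    unfolding E(1) using E(2) by (simp add: power2_eq_square field_simps)
  finally have "coeff2_lim = (1 - ?p) * (1 + 2 * E) / (6 * E)" .
  moreover have "?p^2 - 1 = - ((1 - ?p) * (1 + ?p))" by (simp add: power2_eq_square algebra_simps)
  ultimately have "\<theta> * nu_sqsum_lim
      = \<theta> * ((2 / (4*\<theta> + 1)) * (1 + 2 * E) / (6 * E))^2 / ((2 / (4*\<theta> + 1)) * (8 * \<theta> / (4*\<theta> + 1)))"
    unfolding nu_sqsum_lim_def p by simp
  also have "\<dots> = (1 + 2 * E)^2 / (144 * E^2)"
  proof -
    have generic: "t * ((2 / u) * X / (6 * E))^2 / ((2 / u) * (8 * t / u)) = X^2 / (144 * E^2)"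
      if "t > 0" "u > 0" for t u X :: real
      using that E(2) by (simp add: field_simps power2_eq_square)
    show ?thesis by (rule generic) (use assms(3) in auto)
  qed
  finally show "(\<lambda>N. \<theta> * nu_sqsum \<rho> T \<theta> N) \<longlonglongrightarrow> (1 + 2 * E)^2 / (144 * E^2)"
    using tendsto_mult_left[OF nu_sqsum_tendsto[OF assms(1-3) refl refl], of \<theta>] by simp
  show "omega_sum \<rho> T \<theta> \<longlonglongrightarrow> \<rho> * T + 1"
    using omega_sums_tendsto(1)[OF assms(1-3) refl] by simp
  show "(\<lambda>N. \<theta> * omega_sqsum \<rho> T \<theta> N) \<longlonglongrightarrow> 1/4"
    using tendsto_mult_left[OF omega_sums_tendsto(2)[OF assms(1-3) refl], of \<theta>] assms(3) by simp
qed

lemma untaxed_sum_limits: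
  fixes \<rho> T :: real
  assumes "\<rho> > 0" "T > 0"
  defines "E \<equiv> exp (3 * (\<rho> * T))"
  shows "(\<lambda>n. nu_sum \<rho> T 0 (2*n)) \<longlonglongrightarrow> \<rho> * T / 3 + (10 * E^2 + E + 7) / (9 * (2 * E^2 + 1))"
    and "(\<lambda>n. nu_sum \<rho> T 0 (2*n+1)) \<longlonglongrightarrow> \<rho> * T / 3 + (10 * E^2 - 3 * E - 7) / (9 * (2 * E^2 - 1))"
proof -
  have p: "root_product (3/2) = -1" by (simp add: root_product_def)
  interpret even: refining_grid "\<rho> * T" "3/2" "\<lambda>n. 2*n" 1
    by (rule refining_grid_untaxed) (use assms in auto)
  interpret odd: refining_grid "\<rho> * T" "3/2" "\<lambda>n. 2*n+1" "-1"
    by (rule refining_grid_untaxed) (use assms in auto)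
  have "even.growth = E" "odd.growth = E" by (simp_all add: even.growth_def odd.growth_def E_def)
  moreover have "4 * (- 1 + E) * (E - 1) + 3 * (1 + 2 * E) * (E + 1) = 10 * E^2 + E + 7"
    and "4 * (1 + E) * (E - 1) + 3 * (1 + 2 * E) * (E - 1) = 10 * E^2 - 3 * E - 7"
    by (simp_all add: power2_eq_square algebra_simps)
  ultimately have "even.nu_sum_lim = \<rho> * T / 3 + (10 * E^2 + E + 7) / (9 * (2 * E^2 + 1))"
    and "odd.nu_sum_lim = \<rho> * T / 3 + (10 * E^2 - 3 * E - 7) / (9 * (2 * E^2 - 1))"
    unfolding even.nu_sum_lim_eq odd.nu_sum_lim_eq p by (simp_all add: algebra_simps)
  then show "(\<lambda>n. nu_sum \<rho> T 0 (2*n)) \<longlonglongrightarrow> \<rho> * T / 3 + (10 * E^2 + E + 7) / (9 * (2 * E^2 + 1))"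
    and "(\<lambda>n. nu_sum \<rho> T 0 (2*n+1)) \<longlonglongrightarrow> \<rho> * T / 3 + (10 * E^2 - 3 * E - 7) / (9 * (2 * E^2 - 1))"
    using even.nu_sum_tendsto[OF assms(1,2) order_refl refl] odd.nu_sum_tendsto[OF assms(1,2) order_refl refl]
    by simp_all
qed

section \<open>Tax revenues and taxation costs in the limit\<close>

lemma TR_tendsto:
  fixes \<rho> T \<theta> x y :: real
  assumes "\<rho> > 0" "T > 0" "\<theta> > 0"
  defines "E \<equiv> exp (3 * (\<rho> * T))"
  shows "(\<lambda>N. TR \<rho> T \<theta> x y N) \<longlonglongrightarrow>
    9 * (x+y)^2 * (1 + 2 * E)^2 / (8 * (1 - 2 * E * (5 + 3 * (\<rho> * T)))^2) + (x-y)^2 / (8 * (\<rho> * T + 1)^2)"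
proof -
  let ?P = "6 * (\<rho> * T) * E + 10 * E - 1"
  have rT: "\<rho> * T > 0" using assms by simp
  have E: "E > 1" using rT by (simp add: E_def)
  then have P: "?P > 0" using rT by (smt (verit) mult_pos_pos)
  have "(\<lambda>N. (x+y)^2/2 * ((\<theta> * nu_sqsum \<rho> T \<theta> N) / (nu_sum \<rho> T \<theta> N)^2)
       + (x-y)^2/2 * ((\<theta> * omega_sqsum \<rho> T \<theta> N) / (omega_sum \<rho> T \<theta> N)^2))
     \<longlonglongrightarrow> (x+y)^2/2 * ((1 + 2 * E)^2 / (144 * E^2) / (?P / (18 * E))^2)
       + (x-y)^2/2 * (1/4 / (\<rho> * T + 1)^2)"
    by (intro tendsto_intros taxed_sum_limits[OF assms(1-3), folded E_def]) (use P E rT in auto)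
  moreover have "eventually (\<lambda>N. (x+y)^2/2 * ((\<theta> * nu_sqsum \<rho> T \<theta> N) / (nu_sum \<rho> T \<theta> N)^2)
       + (x-y)^2/2 * ((\<theta> * omega_sqsum \<rho> T \<theta> N) / (omega_sum \<rho> T \<theta> N)^2) = TR \<rho> T \<theta> x y N) sequentially"
    using eventually_gt_at_top[of 0]
    by eventually_elim (use assms in \<open>simp add: TR_eq_sums algebra_simps\<close>)
  moreover have "(x+y)^2/2 * ((1 + 2 * E)^2 / (144 * E^2) / (?P / (18 * E))^2) + (x-y)^2/2 * (1/4 / (\<rho> * T + 1)^2)
      = 9 * (x+y)^2 * (1 + 2 * E)^2 / (8 * (1 - 2 * E * (5 + 3 * (\<rho> * T)))^2) + (x-y)^2 / (8 * (\<rho> * T + 1)^2)"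
  proof -
    have generic: "X/2 * ((1 + 2*E)^2 / (144 * E^2) / (Q / (18 * E))^2) + Y/2 * (1/4 / (s + 1)^2)
        = 9 * X * (1 + 2*E)^2 / (8 * Q^2) + Y / (8 * (s + 1)^2)" if "Q > 0" "s > 0" for X Y Q s :: real
      using that E by (simp add: field_simps power2_eq_square)
    have "(1 - 2 * E * (5 + 3 * (\<rho> * T)))^2 = ?P^2" by (simp add: power2_eq_square algebra_simps)
    then show ?thesis using generic[OF P rT] by simp
  qed
  ultimately show ?thesis using Lim_transform_eventually by fastforce
qed

lemma liminf_eq_of_even_odd_tendsto:
  fixes f :: "nat \<Rightarrow> real"
  assumes even: "(\<lambda>n. f (2*n)) \<longlonglongrightarrow> A" and odd: "(\<lambda>n. f (2*n+1)) \<longlonglongrightarrow> B" and "A \<le> B"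
  shows "liminf (\<lambda>N. ereal (f N)) = ereal A"
proof (rule antisym)
  have "strict_mono (\<lambda>n::nat. 2*n)" by (rule strict_monoI) simp
  then have "liminf (\<lambda>N. ereal (f N)) \<le> liminf ((\<lambda>N. ereal (f N)) \<circ> (\<lambda>n. 2*n))" by (rule liminf_subseq_mono)
  also have "\<dots> = ereal A"
    using lim_imp_Liminf[OF trivial_limit_sequentially tendsto_ereal[OF even]] by (simp add: o_def)
  finally show "liminf (\<lambda>N. ereal (f N)) \<le> ereal A" .
  show "ereal A \<le> liminf (\<lambda>N. ereal (f N))"
    unfolding le_Liminf_iff
  proof (intro allI impI)
    fix c assume "c < ereal A"
    moreover from this have "c < ereal B" using \<open>A \<le> B\<close> by (meson ereal_less_eq(3) less_le_trans)
    ultimately have "eventually (\<lambda>n. c < ereal (f (2*n)) \<and> c < ereal (f (2*n+1))) sequentially"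
      using order_tendstoD(1)[OF tendsto_ereal[OF even]] order_tendstoD(1)[OF tendsto_ereal[OF odd]]
      by (simp add: eventually_conj)
    then obtain M where M: "\<And>n. n \<ge> M \<Longrightarrow> c < ereal (f (2*n)) \<and> c < ereal (f (2*n+1))"
      unfolding eventually_sequentially by blast
    have "c < ereal (f N)" if "N \<ge> 2*M" for N
      using M[of "N div 2"] that by (cases "even N") (auto elim!: evenE oddE)
    then show "eventually (\<lambda>N. c < ereal (f N)) sequentially"
      unfolding eventually_sequentially by blast
  qed
qed

lemma TR_minus_TC_tendsto_along:
  fixes \<rho> T \<theta> x y s0 :: real
  assumes "\<rho> > 0" "T > 0" "\<theta> > 0" and j: "strict_mono j"
    and untaxed: "(\<lambda>n. nu_sum \<rho> T 0 (j n)) \<longlonglongrightarrow> S0" "S0 > 0"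
  defines "E \<equiv> exp (3 * (\<rho> * T))"
  defines "S \<equiv> (6 * (\<rho> * T) * E + 10 * E - 1) / (18 * E)"
  shows "(\<lambda>n. TR \<rho> T \<theta> x y (j n) - TC \<rho> T \<theta> s0 x y (j n)) \<longlonglongrightarrow>
    (x+y)^2 * (1 / (3 * S0) - 1 / (3 * S) + 2 * ((1 + 2 * E)^2 / (144 * E^2)) / (3 * S^2))"
proof -
  have fj: "filterlim j sequentially sequentially" by (rule filterlim_subseq[OF j])
  have "E > 1" using assms by (simp add: E_def)
  moreover have "\<rho> * T > 0" using assms by simp
  ultimately have S: "S > 0" unfolding S_def by (smt (verit) mult_pos_pos divide_pos_pos)
  note taxed = taxed_sum_limits(1,2)[OF assms(1-3), folded E_def]
  have sums: "(\<lambda>n. nu_sum \<rho> T \<theta> (j n)) \<longlonglongrightarrow> S"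
    "(\<lambda>n. \<theta> * nu_sqsum \<rho> T \<theta> (j n)) \<longlonglongrightarrow> (1 + 2 * E)^2 / (144 * E^2)"
    using filterlim_compose[OF taxed(1) fj] filterlim_compose[OF taxed(2) fj] by (simp_all add: S_def)
  have "eventually (\<lambda>n. j n > 0) sequentially"
    using filterlim_iff[THEN iffD1, OF fj, rule_format, OF eventually_gt_at_top[of 0]] by simp
  moreover have "eventually (\<lambda>n. nu_sum \<rho> T \<theta> (j n) \<noteq> 0) sequentially"
    using tendsto_imp_eventually_ne[OF sums(1)] S by simp
  moreover have "eventually (\<lambda>n. nu_sum \<rho> T 0 (j n) \<noteq> 0) sequentially"
    using tendsto_imp_eventually_ne[OF untaxed(1)] untaxed(2) by simp
  ultimately have "eventually (\<lambda>n. (x+y)^2 * (1 / (3 * nu_sum \<rho> T 0 (j n)) - 1 / (3 * nu_sum \<rho> T \<theta> (j n))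
      + 2 * (\<theta> * nu_sqsum \<rho> T \<theta> (j n)) / (3 * (nu_sum \<rho> T \<theta> (j n))^2))
      = TR \<rho> T \<theta> x y (j n) - TC \<rho> T \<theta> s0 x y (j n)) sequentially"
    by eventually_elim (use assms(1-3) in \<open>simp add: TR_minus_TC_eq mult.assoc\<close>)
  moreover have "(\<lambda>n. (x+y)^2 * (1 / (3 * nu_sum \<rho> T 0 (j n)) - 1 / (3 * nu_sum \<rho> T \<theta> (j n))
      + 2 * (\<theta> * nu_sqsum \<rho> T \<theta> (j n)) / (3 * (nu_sum \<rho> T \<theta> (j n))^2)))
    \<longlonglongrightarrow> (x+y)^2 * (1 / (3 * S0) - 1 / (3 * S) + 2 * ((1 + 2 * E)^2 / (144 * E^2)) / (3 * S^2))"
    by (intro tendsto_intros sums untaxed(1)) (use S untaxed(2) in auto)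
  ultimately show ?thesis by (rule Lim_transform_eventually[rotated])
qed

lemma liminf_value_eq:
  fixes E r :: real
  assumes E: "E > 1" and r: "r > 0"
  shows "1 / (3 * (r / 3 + (10 * E^2 + E + 7) / (9 * (2 * E^2 + 1))))
      - 1 / (3 * ((6 * r * E + 10 * E - 1) / (18 * E))) + 2 * ((1 + 2 * E)^2 / (144 * E^2)) / (3 * ((6 * r * E + 10 * E - 1) / (18 * E))^2)
    = 3 * (2 * E + 1)^2 * (3 * (r + 3) + 2 * E^2 * (3*r + 5) - E * (12*r + 19))
      / (2 * (1 - 2 * E * (3*r + 5))^2 * (3*r + E + 2 * E^2 * (3*r + 5) + 7))"
proof -
  define P where "P = 6 * r * E + 10 * E - 1"
  define Q where "Q = 3 * r * (2 * E^2 + 1) + 10 * E^2 + E + 7"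
  have P: "P > 0" using E r unfolding P_def by (smt (verit) mult_pos_pos)
  have Q: "Q > 0" using E r unfolding Q_def by (simp add: add_pos_pos)
  have "2 * E^2 + 1 \<noteq> 0" using zero_le_power2[of E] by linarith
  then have "3 * r * (2 * E^2 + 1) / (9 * (2 * E^2 + 1)) = (3 * r) / 9"
    by (rule nonzero_mult_divide_mult_cancel_right)
  moreover have "Q / (9 * (2 * E^2 + 1)) = 3 * r * (2 * E^2 + 1) / (9 * (2 * E^2 + 1)) + (10 * E^2 + E + 7) / (9 * (2 * E^2 + 1))"
    unfolding Q_def by (simp add: add_divide_distrib)
  ultimately have S0: "r / 3 + (10 * E^2 + E + 7) / (9 * (2 * E^2 + 1)) = Q / (9 * (2 * E^2 + 1))" by simp
  have P2: "(1 - 2 * E * (3*r + 5))^2 = P^2" unfolding P_def by (simp add: power2_eq_square algebra_simps)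
  have Q2: "3*r + E + 2 * E^2 * (3*r + 5) + 7 = Q" unfolding Q_def by (simp add: algebra_simps)
  have "1 / (3 * (Q / (9 * (2 * E^2 + 1)))) - 1 / (3 * (P / (18 * E))) + 2 * ((1 + 2 * E)^2 / (144 * E^2)) / (3 * (P / (18 * E))^2)
    = 3 * (2 * E + 1)^2 * (3 * (r + 3) + 2 * E^2 * (3*r + 5) - E * (12*r + 19)) / (2 * P^2 * Q)"
    using P Q E by (simp add: field_simps power2_eq_square) (simp add: P_def Q_def algebra_simps power2_eq_square)
  then show ?thesis unfolding S0 P2 Q2 P_def[symmetric] .
qed

text \<open>The numerator is increasing in \<open>E\<close> for \<open>E \<ge> 1 + 3 r\<close> and equals \<open>54 r\<^sup>3 + 90 r\<^sup>2\<close> there.\<close>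

lemma liminf_numerator_pos:
  fixes E r :: real
  assumes E: "E \<ge> 1 + 3*r" and r: "r > 0"
  shows "3 * (r + 3) + 2 * E^2 * (3*r + 5) - E * (12*r + 19) > 0"
proof -
  define f where "f e = 3 * (r + 3) + 2 * e^2 * (3*r + 5) - e * (12*r + 19)" for e
  have "f E - f (1 + 3*r) = (E - (1 + 3*r)) * (2 * (3*r+5) * (E + 1 + 3*r) - (12*r + 19))"
    unfolding f_def by (simp add: power2_eq_square algebra_simps)
  moreover have "2 * (3*r+5) * (E + 1 + 3*r) \<ge> 2 * (3*r+5) * 2" using E r by (intro mult_left_mono) auto
  ultimately have "f E \<ge> f (1 + 3*r)" using E by (smt (verit) mult_nonneg_nonneg)
  moreover have "f (1 + 3*r) = 54*r^3 + 90*r^2"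
    unfolding f_def by (simp add: power2_eq_square power3_eq_cube algebra_simps)
  moreover have "54*r^3 + 90*r^2 > 0" using r by (simp add: add_pos_pos)
  ultimately show ?thesis unfolding f_def by simp
qed

lemma liminf_factor_pos:
  fixes r :: real
  assumes r: "r > 0"
  defines "E \<equiv> exp (3 * r)"
  shows "3 * (2 * E + 1)^2 * (3 * (r + 3) + 2 * E^2 * (3*r + 5) - E * (12*r + 19))
      / (2 * (1 - 2 * E * (3*r + 5))^2 * (3*r + E + 2 * E^2 * (3*r + 5) + 7)) > 0"
proof -
  have E: "E \<ge> 1 + 3 * r" using exp_ge_add_one_self[of "3 * r"] by (simp add: E_def)
  have "2 * E * (3*r + 5) = 6 * (r * E) + 10 * E" by (simp add: algebra_simps)
  moreover have "r * E \<ge> 0" using E r by simp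
  ultimately have "1 - 2 * E * (3*r + 5) \<noteq> 0" using E r by linarith
  then show ?thesis using r E liminf_numerator_pos
    by (intro divide_pos_pos mult_pos_pos) (auto simp: add_pos_pos)
qed

lemma TR_minus_TC_liminf:
  fixes \<rho> T \<theta> x y s0 :: real
  assumes "\<rho> > 0" "T > 0" "\<theta> > 0"
  defines "E \<equiv> exp (3 * (\<rho> * T))" and "r \<equiv> \<rho> * T"
  shows "liminf (\<lambda>N. ereal (TR \<rho> T \<theta> x y N - TC \<rho> T \<theta> s0 x y N))
    = ereal ((x+y)^2 * (3 * (2 * E + 1)^2 * (3 * (r + 3) + 2 * E^2 * (3*r + 5) - E * (12*r + 19))
      / (2 * (1 - 2 * E * (3*r + 5))^2 * (3*r + E + 2 * E^2 * (3*r + 5) + 7))))"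
proof -
  define S0e where "S0e = r / 3 + (10 * E^2 + E + 7) / (9 * (2 * E^2 + 1))"
  define S0o where "S0o = r / 3 + (10 * E^2 - 3 * E - 7) / (9 * (2 * E^2 - 1))"
  define G where "G S0 = (x+y)^2 * (1 / (3 * S0) - 1 / (3 * ((6 * r * E + 10 * E - 1) / (18 * E)))
      + 2 * ((1 + 2 * E)^2 / (144 * E^2)) / (3 * ((6 * r * E + 10 * E - 1) / (18 * E))^2))" for S0
  have r: "r > 0" and E: "E > 1" using assms by (simp_all add: r_def E_def)
  have E2: "2 * E^2 - 1 > 0" using one_less_power[OF E, of 2] by simp
  have "10 * E^2 - 3 * E - 7 = (E - 1) * (10 * E + 7)" by (simp add: power2_eq_square algebra_simps)
  then have "10 * E^2 - 3 * E - 7 > 0" using E by simp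
  then have S0o: "S0o > 0" unfolding S0o_def using r E2 by (simp add: add_pos_pos)
  have "(10 * E^2 + E + 7) * (2 * E^2 - 1) - (10 * E^2 - 3 * E - 7) * (2 * E^2 + 1) = 8 * E^3 + 8 * E^2 + 2 * E"
    by (simp add: power2_eq_square power3_eq_cube algebra_simps)
  moreover have "8 * E^3 + 8 * E^2 + 2 * E > 0" using E by (simp add: add_pos_pos)
  ultimately have "(10 * E^2 - 3 * E - 7) * (2 * E^2 + 1) \<le> (10 * E^2 + E + 7) * (2 * E^2 - 1)" by linarith
  moreover have "2 * E^2 + 1 > 0" using zero_le_power2[of E] by linarith
  ultimately have "(10 * E^2 - 3 * E - 7) / (2 * E^2 - 1) \<le> (10 * E^2 + E + 7) / (2 * E^2 + 1)"
    using E2 by (simp add: divide_simps)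
  then have "(10 * E^2 - 3 * E - 7) / (2 * E^2 - 1) / 9 \<le> (10 * E^2 + E + 7) / (2 * E^2 + 1) / 9"
    by (rule divide_right_mono) simp
  then have "S0o \<le> S0e" unfolding S0o_def S0e_def by (simp only: divide_divide_eq_left mult.commute[of 9])
  then have "1 / (3 * S0e) \<le> 1 / (3 * S0o)" using S0o by (simp add: frac_le)
  then have "G S0e \<le> G S0o" unfolding G_def by (intro mult_left_mono) auto
  have "S0e > 0" using S0o \<open>S0o \<le> S0e\<close> by linarith
  have "strict_mono (\<lambda>n::nat. 2*n)" "strict_mono (\<lambda>n::nat. 2*n+1)" by (auto intro!: strict_monoI)
  have "(\<lambda>n. TR \<rho> T \<theta> x y (2*n) - TC \<rho> T \<theta> s0 x y (2*n)) \<longlonglongrightarrow> G S0e"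
    unfolding G_def S0e_def E_def r_def
    by (rule TR_minus_TC_tendsto_along[OF assms(1-3) \<open>strict_mono (\<lambda>n. 2*n)\<close> untaxed_sum_limits(1)[OF assms(1,2)]])
       (use \<open>S0e > 0\<close> in \<open>simp only: S0e_def E_def r_def\<close>)
  moreover have "(\<lambda>n. TR \<rho> T \<theta> x y (2*n+1) - TC \<rho> T \<theta> s0 x y (2*n+1)) \<longlonglongrightarrow> G S0o"
    unfolding G_def S0o_def E_def r_def
    by (rule TR_minus_TC_tendsto_along[OF assms(1-3) \<open>strict_mono (\<lambda>n. 2*n+1)\<close> untaxed_sum_limits(2)[OF assms(1,2)]])
       (use S0o in \<open>simp only: S0o_def E_def r_def\<close>)
  ultimately have "liminf (\<lambda>N. ereal (TR \<rho> T \<theta> x y N - TC \<rho> T \<theta> s0 x y N)) = ereal (G S0e)"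
    using \<open>G S0e \<le> G S0o\<close> by (rule liminf_eq_of_even_odd_tendsto)
  also have "G S0e = (x+y)^2 * (3 * (2 * E + 1)^2 * (3 * (r + 3) + 2 * E^2 * (3*r + 5) - E * (12*r + 19))
      / (2 * (1 - 2 * E * (3*r + 5))^2 * (3*r + E + 2 * E^2 * (3*r + 5) + 7)))"
    unfolding G_def S0e_def liminf_value_eq[OF E r] ..
  finally show ?thesis .
qed

theorem corollary3p5:
  fixes \<rho> T \<theta> x y s0 :: real
  assumes "\<rho> > 0" and "T > 0" and "\<theta> > 0"
  defines "L \<equiv> 3 * (x+y)^2 * (2 * exp (3*\<rho>*T) + 1)^2
      * (3 * (\<rho>*T + 3) + 2 * exp (6*\<rho>*T) * (3*\<rho>*T + 5) - exp (3*\<rho>*T) * (12*\<rho>*T + 19))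
      / (2 * (1 - 2 * exp (3*\<rho>*T) * (3*\<rho>*T + 5))^2
         * (3*\<rho>*T + exp (3*\<rho>*T) + 2 * exp (6*\<rho>*T) * (3*\<rho>*T + 5) + 7))"
  shows "((\<lambda>N. TR \<rho> T \<theta> x y N) \<longlonglongrightarrow>
           9 * (x+y)^2 * (1 + 2 * exp (3*\<rho>*T))^2 / (8 * (1 - 2 * exp (3*\<rho>*T) * (5 + 3*\<rho>*T))^2)
           + (x-y)^2 / (8 * (\<rho>*T + 1)^2))
       \<and> liminf (\<lambda>N. ereal (TR \<rho> T \<theta> x y N - TC \<rho> T \<theta> s0 x y N)) = ereal L
       \<and> L \<ge> 0 \<and> (x \<noteq> - y \<longrightarrow> L > 0)"
proof -
  define E where "E = exp (3 * (\<rho> * T))"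
  define r where "r = \<rho> * T"
  define q where "q = 3 * (2 * E + 1)^2 * (3 * (r + 3) + 2 * E^2 * (3*r + 5) - E * (12*r + 19))
      / (2 * (1 - 2 * E * (3*r + 5))^2 * (3*r + E + 2 * E^2 * (3*r + 5) + 7))"
  have exps: "exp (3*\<rho>*T) = E" "exp (6*\<rho>*T) = E^2"
    by (simp_all add: E_def mult.assoc flip: exp_of_nat_mult)
  have L: "L = (x+y)^2 * q"
    unfolding L_def q_def exps by (simp add: r_def mult.assoc)
  have "q > 0" unfolding q_def E_def r_def by (rule liminf_factor_pos) (use assms in simp)
  then have "L \<ge> 0 \<and> (x \<noteq> - y \<longrightarrow> L > 0)"
    unfolding L by (auto simp: add_eq_0_iff)
  moreover have "liminf (\<lambda>N. ereal (TR \<rho> T \<theta> x y N - TC \<rho> T \<theta> s0 x y N)) = ereal L"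
    unfolding L q_def E_def r_def by (rule TR_minus_TC_liminf[OF assms(1-3)])
  moreover have "(\<lambda>N. TR \<rho> T \<theta> x y N) \<longlonglongrightarrow>
           9 * (x+y)^2 * (1 + 2 * exp (3*\<rho>*T))^2 / (8 * (1 - 2 * exp (3*\<rho>*T) * (5 + 3*\<rho>*T))^2)
           + (x-y)^2 / (8 * (\<rho>*T + 1)^2)"
    using TR_tendsto[OF assms(1-3)] by (simp only: mult.assoc)
  ultimately show ?thesis by blast
qed

end
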